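(* Let $X$ be an admissible complete CAT(1) space, $f\colon X\to(-\infty,\infty]$ a proper lower semicontinuous convex function, and $R_f$ the resolvent of $f$. Then $\mathrm{Argmin}_X f$ is nonempty if and only if there exists $x\in X$ such that $\{R_f^nx\}$ is spherically bounded and $\sup_n d(R_f^nx,R_f^{n-1}x)<\pi/2$. In this case, $\{R_f^nx\}$ is $\Delta$-convergent to an element of $\mathrm{Argmin}_X f$ for each $x\in X$.
   Context: A CAT(1) space is a $\pi$-geodesic metric space in which every geodesic triangle of perimeter $<2\pi$ satisfies the CAT(1) comparison inequality relative to comparison triangles in $\mathbb S^2$; it is admissible if $d(v,v')<\pi/2$ for all $v,v'$ (hence uniquely geodesic). $f$ is proper if it takes a real value somewhere, convex if $f(\alpha x\oplus(1-\alpha)y)\le\alpha f(x)+(1-\alpha)f(y)$ for $x,y\in X$, $\alpha\in(0,1)$, where $\alpha x\oplus(1-\alpha)y$ is the point on the geodesic from $x$ to $y$ at distance $(1-\alpha)d(x,y)$ from $x$. The resolvent is $R_fx=\mathrm{Argmin}_{y\in X}\{f(y)+\tan d(y,x)\sin d(y,x)\}$, which is a well-defined single point for each $x$ (known fact). A sequence is spherically bounded if $\inf_{y}\limsup_n d(x_n,y)<\pi/2$. $\{x_n\}$ is $\Delta$-convergent to $p$ if for every subsequence $\{x_{n_i}\}$, $p$ is the unique minimizer of $z\mapsto\limsup_i d(x_{n_i},z)$. *)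

theory Defs
  imports "HOL-Analysis.Analysis" "HOL-Library.Extended_Real" "HOL-Library.Liminf_Limsup"
begin

definition geodesic :: "(real \<Rightarrow> 'a::metric_space) \<Rightarrow> 'a \<Rightarrow> 'a \<Rightarrow> bool" where
  "geodesic g x y \<longleftrightarrow> g 0 = x \<and> g (dist x y) = y \<and>
     (\<forall>s\<in>{0..dist x y}. \<forall>t\<in>{0..dist x y}. dist (g s) (g t) = \<bar>s - t\<bar>)"

definition S2 :: "(real^3) set" where
  "S2 = {u. norm u = 1}"

definition sdist :: "real^3 \<Rightarrow> real^3 \<Rightarrow> real" where
  "sdist u v = arccos (u \<bullet> v)"

text \<open>CAT(1) comparison inequality for a geodesic triangle with sides g1 (x to y), g2 (y to z),
  g3 (z to x): for every comparison triangle x', y', z' in S^2, and all points p, q of the triangle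
  with comparison points p', q' (same distances along the corresponding sides), d(p,q) \<le> d(p',q').\<close>
definition cat1_comparison ::
  "'a::metric_space \<Rightarrow> 'a \<Rightarrow> 'a \<Rightarrow> (real \<Rightarrow> 'a) \<Rightarrow> (real \<Rightarrow> 'a) \<Rightarrow> (real \<Rightarrow> 'a) \<Rightarrow> bool" where
  "cat1_comparison x y z g1 g2 g3 \<longleftrightarrow>
    (\<forall>x' y' z'. x' \<in> S2 \<and> y' \<in> S2 \<and> z' \<in> S2 \<and>
       sdist x' y' = dist x y \<and> sdist y' z' = dist y z \<and> sdist z' x' = dist z x \<longrightarrow>
       (\<forall>(g, a', b') \<in> {(g1, x', y'), (g2, y', z'), (g3, z', x')}.
        \<forall>(h, c', d') \<in> {(g1, x', y'), (g2, y', z'), (g3, z', x')}.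
        \<forall>s \<in> {0..sdist a' b'}. \<forall>t \<in> {0..sdist c' d'}. \<forall>p' \<in> S2. \<forall>q' \<in> S2.
          sdist a' p' = s \<and> sdist p' b' = sdist a' b' - s \<and>
          sdist c' q' = t \<and> sdist q' d' = sdist c' d' - t \<longrightarrow>
          dist (g s) (h t) \<le> sdist p' q'))"

definition CAT1_space :: "'a::metric_space itself \<Rightarrow> bool" where
  "CAT1_space _ \<longleftrightarrow>
    (\<forall>x y::'a. dist x y < pi \<longrightarrow> (\<exists>g. geodesic g x y)) \<and>
    (\<forall>(x::'a) y z g1 g2 g3. geodesic g1 x y \<and> geodesic g2 y z \<and> geodesic g3 z x \<and>
        dist x y + dist y z + dist z x < 2 * pi \<longrightarrow> cat1_comparison x y z g1 g2 g3)"

definition admissible :: "'a::metric_space itself \<Rightarrow> bool" where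
  "admissible _ \<longleftrightarrow> (\<forall>v v'::'a. dist v v' < pi / 2)"

definition proper_fun :: "('a \<Rightarrow> ereal) \<Rightarrow> bool" where
  "proper_fun f \<longleftrightarrow> (\<exists>x. f x \<noteq> \<infinity> \<and> f x \<noteq> -\<infinity>)"

definition lsc :: "('a::metric_space \<Rightarrow> ereal) \<Rightarrow> bool" where
  "lsc f \<longleftrightarrow> (\<forall>x s. s \<longlonglongrightarrow> x \<longrightarrow> f x \<le> liminf (\<lambda>n. f (s n)))"

text \<open>Convexity along geodesics: alpha x + (1-alpha) y is the point on the geodesic from x to y
  at distance (1-alpha) d(x,y) from x.\<close>
definition geod_convex :: "('a::metric_space \<Rightarrow> ereal) \<Rightarrow> bool" where
  "geod_convex f \<longleftrightarrow> (\<forall>x y g \<alpha>. geodesic g x y \<and> 0 < \<alpha> \<and> \<alpha> < 1 \<longrightarrow>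
      f (g ((1 - \<alpha>) * dist x y)) \<le> ereal \<alpha> * f x + ereal (1 - \<alpha>) * f y)"

definition Argmin :: "('a \<Rightarrow> ereal) \<Rightarrow> 'a set" where
  "Argmin f = {y. \<forall>z. f y \<le> f z}"

definition resolvent :: "('a::metric_space \<Rightarrow> ereal) \<Rightarrow> 'a \<Rightarrow> 'a" where
  "resolvent f x = (THE y. y \<in> Argmin (\<lambda>y. f y + ereal (tan (dist y x) * sin (dist y x))))"

definition spherically_bounded :: "(nat \<Rightarrow> 'a::metric_space) \<Rightarrow> bool" where
  "spherically_bounded xs \<longleftrightarrow> (INF y. limsup (\<lambda>n. ereal (dist (xs n) y))) < ereal (pi / 2)"

definition Delta_convergent :: "(nat \<Rightarrow> 'a::metric_space) \<Rightarrow> 'a \<Rightarrow> bool" where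
  "Delta_convergent xs p \<longleftrightarrow> (\<forall>r. strict_mono r \<longrightarrow>
     (\<forall>z. z \<noteq> p \<longrightarrow> limsup (\<lambda>i. ereal (dist (xs (r i)) p)) < limsup (\<lambda>i. ereal (dist (xs (r i)) z))))"

end

theory Submission
  imports Defs
begin

text \<open>The resolvent is well defined because its objective is uniformly convex along geodesics.
  Testing the variational inequality of one resolvent step at another gives a comparison inequality
  for pairs of steps; at a minimiser p, which is a fixed point, it yields the Fejer monotonicity
  cos d(x, p) \<le> cos d(R x, p) cos d(R x, x).
  Conversely, let theta = cos \<circ> limsup d(x_n, -) along an orbit, and let q be its maximiser, the
  asymptotic centre.  If the orbit is spherically bounded with steps bounded away from pi/2, the
  comparison inequality gives theta q \<le> cos d(R q, q) theta (R q), forcing R q = q, so q is a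
  minimiser.  Once a minimiser exists the steps tend to 0, the same inequality holds for all
  subsequences, and the distances to minimisers converge; hence all subsequences have the same
  asymptotic centre, which is Delta-convergence.\<close>

section \<open>Spherical geometry\<close>

lemma inner_vector3:
  "(vector [a1, a2, a3] :: real^3) \<bullet> vector [b1, b2, b3] = a1 * b1 + a2 * b2 + a3 * b3"
  by (simp add: inner_vec_def sum_3)

lemma S2_iff_inner_self: "u \<in> S2 \<longleftrightarrow> u \<bullet> u = 1"
  by (simp add: S2_def norm_eq_sqrt_inner)

lemma sdist_eq_of_inner_eq_cos:
  assumes "u \<bullet> v = cos t" "0 \<le> t" "t \<le> pi"
  shows "sdist u v = t"
  using assms by (simp add: sdist_def arccos_cos)

lemma spherical_triangle_exists:
  fixes D a b :: real
  assumes "0 < D" "D < pi/2" "0 \<le> a" "a < pi/2" "0 \<le> b" "b < pi/2"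
    and "a \<le> D + b" "D \<le> a + b" "b \<le> a + D"
  shows "\<exists>x' y' z'. x' \<in> S2 \<and> y' \<in> S2 \<and> z' \<in> S2 \<and>
           x' \<bullet> y' = cos D \<and> y' \<bullet> z' = cos a \<and> z' \<bullet> x' = cos b"
proof -
  have sD: "sin D > 0" using assms by (intro sin_gt_zero) auto
  define u where "u = (cos a - cos b * cos D) / sin D"
  have c1: "cos (b + D) \<le> cos a"
    using assms by (intro cos_monotone_0_pi_le) auto
  have c2: "cos a \<le> cos (b - D)"
  proof (cases "D \<le> b")
    case True then show ?thesis using assms by (intro cos_monotone_0_pi_le) auto
  next
    case False
    have "cos a \<le> cos (D - b)" using assms False by (intro cos_monotone_0_pi_le) auto
    then show ?thesis by (metis cos_minus minus_diff_eq)
  qed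
  have sb: "0 \<le> sin b" using assms by (intro sin_ge_zero) auto
  have "\<bar>cos a - cos b * cos D\<bar> \<le> sin b * sin D"
    using c1 c2 unfolding cos_add cos_diff abs_le_iff by linarith
  then have "\<bar>u\<bar> \<le> sin b"
    using sD by (simp add: u_def abs_divide pos_divide_le_eq mult.commute)
  then have uu: "u^2 \<le> (sin b)^2" by (metis abs_le_square_iff abs_of_nonneg sb)
  define w where "w = sqrt (1 - (cos b)^2 - u^2)"
  have w2: "w^2 = 1 - (cos b)^2 - u^2"
    unfolding w_def using uu sin_cos_squared_add[of b] by (intro real_sqrt_pow2) linarith
  define x' :: "real^3" where "x' = vector [1, 0, 0]"
  define y' :: "real^3" where "y' = vector [cos D, sin D, 0]"
  define z' :: "real^3" where "z' = vector [cos b, u, w]"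
  have "x' \<in> S2" by (simp add: S2_iff_inner_self x'_def inner_vector3)
  moreover have "y' \<in> S2" using sin_cos_squared_add[of D]
    by (simp add: S2_iff_inner_self y'_def inner_vector3 power2_eq_square)
  moreover have "z' \<in> S2"
    using w2 by (simp add: S2_iff_inner_self z'_def inner_vector3 power2_eq_square)
  moreover have "y' \<bullet> z' = cos a"
  proof -
    have "sin D * u = cos a - cos b * cos D" using sD by (simp add: u_def)
    then show ?thesis by (simp add: y'_def z'_def inner_vector3)
  qed
  moreover have "x' \<bullet> y' = cos D" "z' \<bullet> x' = cos b"
    by (simp_all add: x'_def y'_def z'_def inner_vector3)
  ultimately show ?thesis by blast
qed

lemma sphere_arc_point:
  fixes x' y' :: "real^3" and D s :: real
  assumes S: "x' \<in> S2" "y' \<in> S2" and xy: "x' \<bullet> y' = cos D"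
    and D: "0 < D" "D < pi" and s: "0 \<le> s" "s \<le> D"
  defines "p' \<equiv> (sin (D - s) / sin D) *\<^sub>R x' + (sin s / sin D) *\<^sub>R y'"
  shows "p' \<in> S2" "x' \<bullet> p' = cos s" "p' \<bullet> y' = cos (D - s)"
    and "\<And>z'. p' \<bullet> z' = (sin (D - s) * (x' \<bullet> z') + sin s * (y' \<bullet> z')) / sin D"
proof -
  have sD: "sin D > 0" using D by (intro sin_gt_zero) auto
  have xx: "x' \<bullet> x' = 1" "y' \<bullet> y' = 1" using S by (auto simp: S2_iff_inner_self)
  have id1: "sin (D - s) + sin s * cos D = sin D * cos s"
    by (simp add: sin_diff algebra_simps)
  have id2: "sin (D - s) * cos D + sin s = sin D * cos (D - s)"
    using sin_diff[of D "D - s"] by simp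
  have "p' \<bullet> p' = ((sin (D - s))^2 + (sin s)^2 + 2 * sin (D - s) * sin s * cos D) / (sin D)^2"
    using xx xy sD by (simp add: p'_def inner_add_left inner_add_right inner_commute
        field_simps power2_eq_square)
  also have "(sin (D - s))^2 + (sin s)^2 + 2 * sin (D - s) * sin s * cos D
      = sin (D - s) * (sin (D - s) + sin s * cos D) + sin s * (sin (D - s) * cos D + sin s)"
    by (simp add: algebra_simps power2_eq_square)
  also have "\<dots> = sin D * (sin (D - s) * cos s + cos (D - s) * sin s)"
    unfolding id1 id2 by (simp add: algebra_simps)
  also have "\<dots> = (sin D)^2"
    using sin_add[of "D - s" s] by (simp add: power2_eq_square)
  finally show "p' \<in> S2" using sD by (simp add: S2_iff_inner_self)
  show "x' \<bullet> p' = cos s"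
    using xx xy id1 sD by (simp add: p'_def inner_add_right field_simps)
  show "p' \<bullet> y' = cos (D - s)"
  proof -
    have "p' \<bullet> y' = (sin (D - s) * cos D + sin s) / sin D"
      using xx xy by (simp add: p'_def inner_add_left add_divide_distrib)
    then show ?thesis using id2 sD by simp
  qed
  show "p' \<bullet> z' = (sin (D - s) * (x' \<bullet> z') + sin s * (y' \<bullet> z')) / sin D" for z'
    by (simp add: p'_def inner_add_left add_divide_distrib)
qed

lemma inner_le_cos_of_le_sdist:
  assumes "u \<in> S2" "v \<in> S2" "0 \<le> t" "t \<le> sdist u v"
  shows "u \<bullet> v \<le> cos t"
proof -
  have "\<bar>u \<bullet> v\<bar> \<le> 1" using Cauchy_Schwarz_ineq2[of u v] assms(1,2) by (simp add: S2_def)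
  then have "cos (sdist u v) = u \<bullet> v" by (simp add: sdist_def cos_arccos_abs)
  moreover have "cos (sdist u v) \<le> cos t"
    using assms \<open>\<bar>u \<bullet> v\<bar> \<le> 1\<close> unfolding sdist_def
    by (intro cos_monotone_0_pi_le) (auto intro: arccos_ubound)
  ultimately show ?thesis by simp
qed

lemma cat1_comparison_point_vertex:
  assumes cmp: "cat1_comparison x y z g1 g2 g3"
    and S: "x' \<in> S2" "y' \<in> S2" "z' \<in> S2"
    and sides: "sdist x' y' = dist x y" "sdist y' z' = dist y z" "sdist z' x' = dist z x"
    and p': "p' \<in> S2" "sdist x' p' = s" "sdist p' y' = sdist x' y' - s"
    and s: "0 \<le> s" "s \<le> sdist x' y'"
  shows "dist (g1 s) (g3 0) \<le> sdist p' z'"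
proof -
  have "sdist z' z' = 0" using S(3) by (simp add: sdist_def S2_iff_inner_self)
  then show ?thesis using cmp S sides p' s unfolding cat1_comparison_def by fastforce
qed

section \<open>Elementary real analysis\<close>

lemma abs_cos_diff_le: "\<bar>cos a - cos b\<bar> \<le> \<bar>a - b\<bar>" for a b :: real
proof -
  have "\<bar>cos a - cos b\<bar> = 2 * \<bar>sin ((a + b) / 2)\<bar> * \<bar>sin ((b - a) / 2)\<bar>"
    by (simp add: cos_diff_cos abs_mult)
  also have "\<dots> \<le> 2 * 1 * \<bar>(b - a) / 2\<bar>"
    by (intro mult_mono abs_sin_x_le_abs_x) auto
  finally show ?thesis by simp
qed

lemma cos_le_cos_of_le_pi_half:
  "0 \<le> u \<Longrightarrow> u \<le> v \<Longrightarrow> v \<le> pi/2 \<Longrightarrow> cos v \<le> cos u"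
  by (intro cos_monotone_0_pi_le) auto

definition inv_sub :: "real \<Rightarrow> real" where
  "inv_sub c = 1 / c - c"

lemma inv_sub_antimono: "0 < c1 \<Longrightarrow> c1 \<le> c2 \<Longrightarrow> inv_sub c2 \<le> inv_sub c1"
  unfolding inv_sub_def by (smt (verit) frac_le zero_less_one)

lemma inv_sub_nonneg: "0 < c \<Longrightarrow> c \<le> 1 \<Longrightarrow> 0 \<le> inv_sub c"
  unfolding inv_sub_def by (simp add: field_simps) (metis mult_le_one less_imp_le)

lemma inv_sub_midpoint_le:
  assumes "0 < c1" "c1 \<le> 1" "0 < c2" "c2 \<le> 1" "0 < k" "k \<le> 1"
  shows "inv_sub ((c1 + c2) / (2 * k)) \<le> (inv_sub c1 + inv_sub c2) / 2 - (1 - k)"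
proof -
  define c where "c = (c1 + c2) / 2"
  have c: "0 < c" "c \<le> 1" using assms unfolding c_def by auto
  have harmonic: "1 / c \<le> (1 / c1 + 1 / c2) / 2"
  proof -
    have "4 * (c1 * c2) \<le> (c1 + c2) * (c1 + c2)"
      using sum_squares_ge_zero[of "c1 - c2" 0] by (simp add: algebra_simps power2_eq_square)
    then show ?thesis using assms unfolding c_def by (simp add: field_simps)
  qed
  have "1 / c - c - (1 - k) - (k / c - c / k) = (1 - k) * (1 / c - 1) + c * (1 / k - 1)"
    using c assms by (simp add: field_simps)
  moreover have "0 \<le> 1 / c - 1" "0 \<le> 1 / k - 1" using c assms by (simp_all add: field_simps)
  then have "0 \<le> (1 - k) * (1 / c - 1)" "0 \<le> c * (1 / k - 1)"
    using c assms by simp_all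
  moreover have "inv_sub ((c1 + c2) / (2 * k)) = k / c - c / k"
    unfolding inv_sub_def c_def using assms by (simp add: field_simps)
  moreover have "(inv_sub c1 + inv_sub c2) / 2 = (1 / c1 + 1 / c2) / 2 - c"
    unfolding inv_sub_def c_def by (simp add: field_simps)
  ultimately show ?thesis using harmonic by linarith
qed

lemma Cauchy_of_cos_half_dist_bound:
  fixes z :: "nat \<Rightarrow> 'a::metric_space"
  assumes bd: "\<And>j k. dist (z j) (z k) < pi/2"
    and H: "\<And>j k. 1 - cos (dist (z j) (z k) / 2) \<le> b j + b k" and b: "b \<longlonglongrightarrow> 0"
  shows "Cauchy z"
  unfolding Cauchy_def
proof (intro allI impI)
  fix e :: real assume e: "0 < e"
  define e' where "e' = min e 1"
  have e': "0 < e'" "e' \<le> e" "e' \<le> 1" using e by (auto simp: e'_def)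
  define \<delta> where "\<delta> = 1 - cos (e' / 2)"
  have "cos (e' / 2) < cos 0" using e' pi_gt3 by (intro cos_monotone_0_pi) auto
  then have "0 < \<delta>" unfolding \<delta>_def by simp
  then have "eventually (\<lambda>j. b j < \<delta> / 2) sequentially"
    using b by (intro order_tendstoD) auto
  then obtain M where M: "\<And>j. M \<le> j \<Longrightarrow> b j < \<delta> / 2"
    unfolding eventually_sequentially by blast
  have "dist (z m) (z n) < e" if "M \<le> m" "M \<le> n" for m n
  proof (rule ccontr)
    assume "\<not> ?thesis"
    then have "cos (dist (z m) (z n) / 2) \<le> cos (e' / 2)"
      using e' bd[of m n] pi_gt3 by (intro cos_monotone_0_pi_le) auto
    moreover note H[of m n] M[OF that(1)] M[OF that(2)]
    ultimately show False unfolding \<delta>_def by argo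
  qed
  then show "\<exists>M. \<forall>m\<ge>M. \<forall>n\<ge>M. dist (z m) (z n) < e" by blast
qed

lemma DERIV_ge_of_difference_quotients:
  fixes G :: "real \<Rightarrow> real"
  assumes "(G has_real_derivative G') (at 0)"
    and "\<And>t. 0 < t \<Longrightarrow> t < 1 \<Longrightarrow> K \<le> (G t - G 0) / t"
  shows "K \<le> G'"
proof -
  have "((\<lambda>t. (G t - G 0) / (t - 0)) \<longlongrightarrow> G') (at_right 0)"
    using has_field_derivative_at_within[OF assms(1), of "{0<..}"]
    by (simp add: has_field_derivative_iff)
  moreover have "eventually (\<lambda>t. K \<le> (G t - G 0) / (t - 0)) (at_right (0::real))"
    unfolding eventually_at_right_field by (rule exI[of _ 1]) (auto intro: assms(2))
  ultimately show ?thesis by (rule tendsto_lowerbound) simp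
qed

lemma eventually_gt_of_contraction:
  fixes e :: "nat \<Rightarrow> real"
  assumes s: "0 \<le> s" "s < 1" and contr: "\<And>n. N \<le> n \<Longrightarrow> s * e n \<le> e (Suc n)" and "0 < \<epsilon>"
  shows "eventually (\<lambda>n. - \<epsilon> < e n) sequentially"
proof -
  have geom: "s ^ k * e N \<le> e (N + k)" for k
  proof (induction k)
    case (Suc k)
    have "s ^ Suc k * e N = s * (s ^ k * e N)" by simp
    also have "\<dots> \<le> s * e (N + k)" by (rule mult_left_mono[OF Suc s(1)])
    also have "\<dots> \<le> e (Suc (N + k))" by (rule contr) simp
    finally show ?case by simp
  qed simp
  have "(\<lambda>k. s ^ k * \<bar>e N\<bar>) \<longlonglongrightarrow> 0"
    using s by (intro tendsto_mult_left_zero LIMSEQ_power_zero) auto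
  then have "eventually (\<lambda>k. s ^ k * \<bar>e N\<bar> < \<epsilon>) sequentially"
    using \<open>0 < \<epsilon>\<close> by (intro order_tendstoD) auto
  then obtain K where K: "\<And>k. K \<le> k \<Longrightarrow> s ^ k * \<bar>e N\<bar> < \<epsilon>"
    unfolding eventually_sequentially by blast
  have "- \<epsilon> < e n" if "N + K \<le> n" for n
  proof -
    have "s ^ (n - N) * - \<bar>e N\<bar> \<le> s ^ (n - N) * e N"
      by (rule mult_left_mono) (use s in auto)
    moreover have "s ^ (n - N) * \<bar>e N\<bar> < \<epsilon>" using K that by simp
    ultimately show ?thesis using geom[of "n - N"] that by simp
  qed
  then show ?thesis unfolding eventually_sequentially by blast
qed

text \<open>The deficit min 0 (\<alpha> n - T) shrinks at least by the factor W / (W + c) in each step.\<close>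
lemma eventually_gt_of_weighted_average:
  fixes \<alpha> w :: "nat \<Rightarrow> real"
  assumes c: "0 < c" and w: "\<And>n. 0 < w n" "\<And>n. w n \<le> W"
    and avg: "\<And>n. N \<le> n \<Longrightarrow> w n * \<alpha> n + c * T \<le> \<alpha> (Suc n) * (w n + c)" and "0 < \<epsilon>"
  shows "eventually (\<lambda>n. T - \<epsilon> < \<alpha> n) sequentially"
proof -
  define e where "e n = min 0 (\<alpha> n - T)" for n
  define s where "s = W / (W + c)"
  have "0 < W" using w[of 0] by linarith
  then have s: "0 \<le> s" "s < 1" using c unfolding s_def by auto
  have "s * e n \<le> e (Suc n)" if "N \<le> n" for n
  proof (cases "T \<le> \<alpha> (Suc n)")
    case True
    then show ?thesis using s by (simp add: e_def mult_nonneg_nonpos)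
  next
    case False
    have pos: "0 < w n + c" using w(1)[of n] c by simp
    have A: "w n * (\<alpha> n - T) \<le> (\<alpha> (Suc n) - T) * (w n + c)"
      using avg[OF that] by (simp add: algebra_simps)
    moreover have "(\<alpha> (Suc n) - T) * (w n + c) < 0" using False pos by (simp add: mult_neg_pos)
    ultimately have "w n * (\<alpha> n - T) < 0" by linarith
    then have lt: "\<alpha> n - T < 0" using w(1)[of n] by (simp add: mult_less_0_iff)
    have "s * (\<alpha> n - T) \<le> w n / (w n + c) * (\<alpha> n - T)"
    proof (rule mult_right_mono_neg)
      show "w n / (w n + c) \<le> s"
        unfolding s_def using w[of n] c by (simp add: frac_le_eq field_simps mult_right_mono)
    qed (use lt in simp)
    also have "\<dots> \<le> \<alpha> (Suc n) - T" using A pos by (simp add: divide_le_eq mult.commute)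
    finally show ?thesis using lt False by (simp add: e_def)
  qed
  from eventually_gt_of_contraction[where e = e, OF s this \<open>0 < \<epsilon>\<close>]
  show ?thesis by (rule eventually_mono) (auto simp: e_def min_def split: if_splits)
qed

lemma tendsto_zero_of_cos_tendsto_one:
  fixes \<delta> :: "nat \<Rightarrow> real"
  assumes "(\<lambda>n. cos (\<delta> n)) \<longlonglongrightarrow> 1" and b: "\<And>n. 0 \<le> \<delta> n" "\<And>n. \<delta> n \<le> pi/2"
  shows "\<delta> \<longlonglongrightarrow> 0"
  unfolding tendsto_iff
proof (intro allI impI)
  fix e :: real assume e: "0 < e"
  define e' where "e' = min e 1"
  have e': "0 < e'" "e' \<le> e" "e' \<le> 1" using e unfolding e'_def by auto
  have "cos e' < cos 0" using e' pi_gt3 by (intro cos_monotone_0_pi) auto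
  then have "eventually (\<lambda>n. cos e' < cos (\<delta> n)) sequentially"
    using assms(1) by (intro order_tendstoD) auto
  then show "eventually (\<lambda>n. dist (\<delta> n) 0 < e) sequentially"
  proof eventually_elim
    case (elim n)
    then have "\<delta> n < e'" using b[of n] e' pi_gt3 by (subst (asm) cos_mono_less_eq) auto
    then show ?case using b[of n] e' by simp
  qed
qed

section \<open>Admissible CAT(1) spaces\<close>

locale admissible_CAT1_convex =
  fixes f :: "'a::metric_space \<Rightarrow> ereal"
  assumes CAT1: "CAT1_space TYPE('a)" and admissible: "admissible TYPE('a)"
    and complete: "complete (UNIV :: 'a set)"
    and f_not_minf: "\<And>x. f x \<noteq> -\<infinity>" and f_proper: "proper_fun f"
    and f_lsc: "lsc f" and f_convex: "geod_convex f"
begin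

lemma dist_lt_pi_half: "dist x y < pi/2" for x y :: 'a
  using admissible unfolding admissible_def by blast

lemma dist_le_pi_half: "dist x y \<le> pi/2" for x y :: 'a
  using dist_lt_pi_half less_imp_le by blast

lemma dist_lt_pi: "dist x y < pi" for x y :: 'a
  using dist_lt_pi_half[of x y] pi_gt_zero by linarith

lemma cos_dist_pos: "0 < cos (dist x y)" for x y :: 'a
  using dist_lt_pi_half[of x y] zero_le_dist[of x y] pi_gt_zero
  by (intro cos_gt_zero_pi) linarith+

lemma cos_dist_lt_one: "x \<noteq> y \<Longrightarrow> cos (dist x y) < 1" for x y :: 'a
  using cos_monotone_0_pi[of 0 "dist x y"] dist_lt_pi[of x y] by simp

lemma cos_half_dist_pos: "0 < cos (dist x y / 2)" for x y :: 'a
  using dist_lt_pi_half[of x y] zero_le_dist[of x y] pi_gt_zero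
  by (intro cos_gt_zero_pi) linarith+

lemma cos_half_dist_lt_one: "x \<noteq> y \<Longrightarrow> cos (dist x y / 2) < 1" for x y :: 'a
proof -
  have "dist x y / 2 \<le> pi" using dist_lt_pi[of x y] pi_gt_zero by linarith
  then show "x \<noteq> y \<Longrightarrow> ?thesis" using cos_monotone_0_pi[of 0 "dist x y / 2"] by simp
qed

lemma sin_dist_pos: "x \<noteq> y \<Longrightarrow> 0 < sin (dist x y)" for x y :: 'a
  using dist_lt_pi[of x y] by (intro sin_gt_zero) auto

lemma geodesic_exists: "\<exists>g. geodesic g x y" for x y :: 'a
  using CAT1 dist_lt_pi[of x y] unfolding CAT1_space_def by blast

lemma dist_geodesic_point:
  assumes "geodesic (g :: real \<Rightarrow> 'a) x y" "0 \<le> s" "s \<le> dist x y"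
  shows "dist x (g s) = s"
proof -
  have "g 0 = x" and "\<forall>s\<in>{0..dist x y}. \<forall>t\<in>{0..dist x y}. dist (g s) (g t) = \<bar>s - t\<bar>"
    using assms(1) unfolding geodesic_def by auto
  then show ?thesis using assms(2,3) by force
qed

text \<open>CAT(1) comparison of a point of the side from x to y with the opposite vertex z; for a
  triangle on the sphere this is an equality.\<close>
lemma cos_dist_geodesic_point_ge:
  fixes x y z :: 'a
  assumes g: "geodesic g x y" and ne: "x \<noteq> y" and s: "0 \<le> s" "s \<le> dist x y"
  shows "sin (dist x y - s) * cos (dist x z) + sin s * cos (dist y z)
    \<le> cos (dist (g s) z) * sin (dist x y)"
proof -
  define D where "D = dist x y"
  obtain g2 g3 where g2: "geodesic g2 y z" and g3: "geodesic g3 z x"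
    using geodesic_exists by blast
  have "dist x y + dist y z + dist z x < 2 * pi"
    using dist_lt_pi_half[of x y] dist_lt_pi_half[of y z] dist_lt_pi_half[of z x] pi_gt_zero
    by linarith
  then have cmp: "cat1_comparison x y z g g2 g3"
    using CAT1 g g2 g3 unfolding CAT1_space_def by blast
  have D: "0 < D" "D < pi" using ne dist_lt_pi[of x y] unfolding D_def by auto
  have "dist y z \<le> D + dist z x" "D \<le> dist y z + dist z x" "dist z x \<le> dist y z + D"
    using dist_triangle[of y z x] dist_triangle[of x y z] dist_triangle[of z x y]
    unfolding D_def by (simp_all add: dist_commute)
  then obtain x' y' z' where S: "x' \<in> S2" "y' \<in> S2" "z' \<in> S2"
    and xy: "x' \<bullet> y' = cos D" and yz: "y' \<bullet> z' = cos (dist y z)" and zx: "z' \<bullet> x' = cos (dist z x)"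
    using spherical_triangle_exists[OF D(1) _ zero_le_dist dist_lt_pi_half zero_le_dist dist_lt_pi_half]
      dist_lt_pi_half[of x y] unfolding D_def by blast
  have sides: "sdist x' y' = D" "sdist y' z' = dist y z" "sdist z' x' = dist z x"
    using D by (auto intro!: sdist_eq_of_inner_eq_cos xy yz zx less_imp_le[OF dist_lt_pi])
  define p' where "p' = (sin (D - s) / sin D) *\<^sub>R x' + (sin s / sin D) *\<^sub>R y'"
  note arc = sphere_arc_point[OF S(1,2) xy D s[folded D_def], folded p'_def]
  have sD: "s \<le> D" using s unfolding D_def by simp
  have "sdist x' p' = s" by (rule sdist_eq_of_inner_eq_cos[OF arc(2)]) (use s sD D in auto)
  moreover have "sdist p' y' = sdist x' y' - s"
    unfolding sides(1) by (rule sdist_eq_of_inner_eq_cos[OF arc(3)]) (use s sD D in auto)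
  ultimately have "dist (g s) (g3 0) \<le> sdist p' z'"
    using cat1_comparison_point_vertex[OF cmp S sides[unfolded D_def] arc(1)] s sides(1)
    unfolding D_def by simp
  moreover have "g3 0 = z" using g3 unfolding geodesic_def by simp
  ultimately have "p' \<bullet> z' \<le> cos (dist (g s) z)"
    using arc(1) S(3) by (intro inner_le_cos_of_le_sdist) auto
  moreover have "x' \<bullet> z' = cos (dist x z)" using zx by (simp only: inner_commute dist_commute)
  then have "p' \<bullet> z' = (sin (D - s) * cos (dist x z) + sin s * cos (dist y z)) / sin D"
    using arc(4)[of z'] yz by simp
  moreover have "0 < sin D" using D by (intro sin_gt_zero) auto
  ultimately have "sin (D - s) * cos (dist x z) + sin s * cos (dist y z) \<le> cos (dist (g s) z) * sin D"
    by (simp add: pos_divide_le_eq)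
  then show ?thesis unfolding D_def .
qed

lemma cos_dist_midpoint_ge:
  fixes x y z :: 'a
  assumes g: "geodesic g x y" and ne: "x \<noteq> y"
  shows "cos (dist x z) + cos (dist y z) \<le> 2 * cos (dist x y / 2) * cos (dist (g (dist x y / 2)) z)"
proof -
  define D where "D = dist x y"
  define m where "m = g (D / 2)"
  have "0 < D" "D < pi" using ne dist_lt_pi[of x y] unfolding D_def by auto
  then have pos: "0 < sin (D / 2)" by (intro sin_gt_zero) auto
  have "sin (D / 2) * (cos (dist x z) + cos (dist y z))
      = sin (D - D / 2) * cos (dist x z) + sin (D / 2) * cos (dist y z)"
    by (simp add: distrib_left)
  also have "\<dots> \<le> cos (dist m z) * sin D"
    using cos_dist_geodesic_point_ge[OF g ne, of "D / 2" z] \<open>0 < D\<close> unfolding D_def m_def by simp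
  also have "\<dots> = sin (D / 2) * (2 * cos (D / 2) * cos (dist m z))"
    using sin_double[of "D / 2"] by simp
  finally show ?thesis using pos unfolding D_def m_def by simp
qed

lemma f_eq_ereal: "f y \<noteq> \<infinity> \<Longrightarrow> f y = ereal (real_of_ereal (f y))"
  using f_not_minf[of y] by (cases "f y") auto

lemma f_geodesic_point_le:
  assumes "geodesic g x y" "0 < t" "t < 1"
  shows "f (g (t * dist x y)) \<le> ereal (1 - t) * f x + ereal t * f y"
  using f_convex[unfolded geod_convex_def, rule_format, of g x y "1 - t"] assms by simp

lemma f_le_of_tendsto:
  assumes "s \<longlonglongrightarrow> x" "eventually (\<lambda>n. f (s n) \<le> c) sequentially"
  shows "f x \<le> c"
proof -
  have "f x \<le> liminf (\<lambda>n. f (s n))" using f_lsc assms(1) unfolding lsc_def by blast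
  also have "\<dots> \<le> c" using assms(2) by (intro Liminf_le) auto
  finally show ?thesis .
qed

end

section \<open>The resolvent\<close>

definition penalty :: "'a::metric_space \<Rightarrow> 'a \<Rightarrow> real" where
  "penalty x y = tan (dist y x) * sin (dist y x)"

definition resolvent_objective :: "('a::metric_space \<Rightarrow> ereal) \<Rightarrow> 'a \<Rightarrow> 'a \<Rightarrow> ereal" where
  "resolvent_objective f x y = f y + ereal (penalty x y)"

lemma resolvent_eq_The: "resolvent f x = (THE y. y \<in> Argmin (resolvent_objective f x))"
  by (simp add: resolvent_def resolvent_objective_def[abs_def] penalty_def)

context admissible_CAT1_convex
begin

lemma penalty_eq_inv_sub: "penalty x y = inv_sub (cos (dist y x))" for x y :: 'a
  using cos_dist_pos[of y x] sin_cos_squared_add[of "dist y x"]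
  unfolding penalty_def inv_sub_def tan_def by (simp add: field_simps power2_eq_square)

lemma penalty_nonneg: "0 \<le> penalty x y" for x y :: 'a
  unfolding penalty_eq_inv_sub using cos_dist_pos by (intro inv_sub_nonneg) auto

lemma penalty_self [simp]: "penalty x x = 0"
  unfolding penalty_def by simp

lemma tendsto_penalty:
  fixes y :: "nat \<Rightarrow> 'a"
  shows "y \<longlonglongrightarrow> p \<Longrightarrow> (\<lambda>k. penalty x (y k)) \<longlonglongrightarrow> penalty x p"
  unfolding penalty_eq_inv_sub inv_sub_def using cos_dist_pos[of p x]
  by (intro tendsto_intros) auto

lemma objective_eq_ereal:
  "f y \<noteq> \<infinity> \<Longrightarrow> resolvent_objective f x y = ereal (real_of_ereal (f y) + penalty x y)"
  unfolding resolvent_objective_def by (subst f_eq_ereal) auto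

lemma objective_finite_iff: "resolvent_objective f x y \<noteq> \<infinity> \<longleftrightarrow> f y \<noteq> \<infinity>"
  unfolding resolvent_objective_def by auto

lemma f_geodesic_point_le_of_very_negative:
  assumes g: "geodesic g x0 y" and t: "0 < t" "t < 1"
    and x0: "f x0 = ereal F0" and y: "f y < ereal (- k / t)"
  shows "f (g (t * dist x0 y)) \<le> ereal (\<bar>F0\<bar> - k)"
proof -
  obtain Y where fy: "f y = ereal Y" using y f_not_minf[of y] by (cases "f y") auto
  have "t * Y < - k" using y t fy by (simp add: field_simps)
  moreover have "(1 - t) * F0 \<le> (1 - t) * \<bar>F0\<bar>" using t by (intro mult_left_mono) auto
  moreover have "(1 - t) * \<bar>F0\<bar> \<le> \<bar>F0\<bar>" using t by (simp add: mult_left_le_one_le)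
  ultimately have "ereal ((1 - t) * F0 + t * Y) \<le> ereal (\<bar>F0\<bar> - k)" by simp
  moreover have "f (g (t * dist x0 y)) \<le> ereal ((1 - t) * F0 + t * Y)"
    using f_geodesic_point_le[OF g t] x0 fy by simp
  ultimately show ?thesis by (rule order_trans[rotated])
qed

text \<open>If f were unbounded below, the points at fraction 2^-(k+1) along geodesics from a point
  of finite value towards points of value below -k 2^(k+1) would converge to that point while their
  values tend to -\<infinity>, contradicting lower semicontinuity.\<close>
lemma f_bounded_below: "\<exists>M. \<forall>y. ereal M \<le> f y"
proof (rule ccontr)
  assume unbounded: "\<not> ?thesis"
  obtain x0 where "f x0 \<noteq> \<infinity>" using f_proper unfolding proper_fun_def by blast
  then obtain F0 where x0: "f x0 = ereal F0" using f_eq_ereal by blast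
  define t :: "nat \<Rightarrow> real" where "t k = (1/2) ^ Suc k" for k
  have t: "0 < t k" "t k < 1" for k
    using power_le_one[of "1/2::real" k] unfolding t_def by simp_all
  have "\<forall>k. \<exists>y. f y < ereal (- real k / t k)" using unbounded by (meson not_le)
  then obtain y where y: "\<And>k. f (y k) < ereal (- real k / t k)" by metis
  have "\<forall>k. \<exists>g. geodesic g x0 (y k)" using geodesic_exists by blast
  then obtain g where g: "\<And>k. geodesic (g k) x0 (y k)" by metis
  define z where "z k = g k (t k * dist x0 (y k))" for k
  have fz: "f (z k) \<le> ereal (\<bar>F0\<bar> - real k)" for k
    unfolding z_def by (rule f_geodesic_point_le_of_very_negative[OF g t x0 y])
  have close: "dist (z k) x0 \<le> pi / 2 * t k" for k
  proof -
    have "t k * dist x0 (y k) \<le> dist x0 (y k)" using t[of k] by (simp add: mult_left_le_one_le)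
    then have "dist (z k) x0 = t k * dist x0 (y k)"
      using dist_geodesic_point[OF g[of k]] t[of k] by (simp add: z_def dist_commute)
    also have "\<dots> \<le> t k * (pi / 2)" using dist_le_pi_half t[of k] by (intro mult_left_mono) auto
    finally show ?thesis by (simp add: mult.commute)
  qed
  have "(\<lambda>k. dist (z k) x0) \<longlonglongrightarrow> 0"
  proof (rule Lim_null_comparison)
    show "eventually (\<lambda>k. norm (dist (z k) x0) \<le> pi / 2 * t k) sequentially" using close by simp
    show "(\<lambda>k. pi / 2 * t k) \<longlonglongrightarrow> 0"
      unfolding t_def by (intro tendsto_mult_right_zero LIMSEQ_power_zero[THEN LIMSEQ_Suc]) simp
  qed
  then have "z \<longlonglongrightarrow> x0" by (rule tendsto_dist_iff[THEN iffD2])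
  moreover have "eventually (\<lambda>k. f (z k) \<le> ereal (F0 - 1)) sequentially"
  proof -
    obtain N :: nat where "\<bar>F0\<bar> - (F0 - 1) \<le> real N" using real_arch_simple by blast
    then have "f (z k) \<le> ereal (F0 - 1)" if "N \<le> k" for k
    proof -
      have "ereal (\<bar>F0\<bar> - real k) \<le> ereal (F0 - 1)"
        using \<open>\<bar>F0\<bar> - (F0 - 1) \<le> real N\<close> that by simp
      then show ?thesis by (rule order_trans[OF fz])
    qed
    then show ?thesis unfolding eventually_sequentially by blast
  qed
  ultimately have "f x0 \<le> ereal (F0 - 1)" by (rule f_le_of_tendsto)
  then show False using x0 by simp
qed

text \<open>Uniform convexity of the objective, from the convexity of f and of inv_sub and the midpoint
  comparison of cosines.\<close>
lemma objective_midpoint_le: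
  fixes x y1 y2 :: 'a
  assumes h1: "resolvent_objective f x y1 = ereal h1" and h2: "resolvent_objective f x y2 = ereal h2"
    and ne: "y1 \<noteq> y2" and g: "geodesic g y1 y2"
  shows "resolvent_objective f x (g (dist y1 y2 / 2))
    \<le> ereal ((h1 + h2) / 2 - (1 - cos (dist y1 y2 / 2)))"
proof -
  define m where "m = g (dist y1 y2 / 2)"
  define k where "k = cos (dist y1 y2 / 2)"
  define c1 where "c1 = cos (dist y1 x)"
  define c2 where "c2 = cos (dist y2 x)"
  have "f y1 \<noteq> \<infinity>" "f y2 \<noteq> \<infinity>" using h1 h2 objective_finite_iff[of x y1] objective_finite_iff[of x y2] by auto
  then obtain F1 F2 where F1: "f y1 = ereal F1" and F2: "f y2 = ereal F2" using f_eq_ereal by blast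
  have h: "h1 = F1 + penalty x y1" "h2 = F2 + penalty x y2"
    using h1 h2 F1 F2 unfolding resolvent_objective_def by simp_all
  have "f m \<le> ereal (1 - 1/2) * f y1 + ereal (1/2) * f y2"
    using f_geodesic_point_le[OF g, of "1/2"] unfolding m_def by simp
  then have fm: "f m \<le> ereal ((F1 + F2) / 2)" using F1 F2 by (simp add: add_divide_distrib)
  have c: "0 < c1" "c1 \<le> 1" "0 < c2" "c2 \<le> 1" unfolding c1_def c2_def using cos_dist_pos by auto
  have k: "0 < k" "k \<le> 1" unfolding k_def using cos_half_dist_pos by auto
  have "c1 + c2 \<le> 2 * k * cos (dist m x)"
    using cos_dist_midpoint_ge[OF g ne, of x] unfolding c1_def c2_def k_def m_def by simp
  then have "(c1 + c2) / (2 * k) \<le> cos (dist m x)" using k by (simp add: divide_le_eq mult.commute)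
  then have "penalty x m \<le> inv_sub ((c1 + c2) / (2 * k))"
    unfolding penalty_eq_inv_sub using c k by (intro inv_sub_antimono) auto
  also have "\<dots> \<le> (penalty x y1 + penalty x y2) / 2 - (1 - k)"
    unfolding c1_def c2_def penalty_eq_inv_sub using c k
    by (intro inv_sub_midpoint_le) (auto simp: c1_def c2_def)
  finally have "f m + ereal (penalty x m)
      \<le> ereal ((F1 + F2) / 2) + ereal ((penalty x y1 + penalty x y2) / 2 - (1 - k))"
    using fm by (intro add_mono) auto
  also have "\<dots> = ereal ((h1 + h2) / 2 - (1 - k))" by (simp add: h field_simps)
  finally show ?thesis unfolding resolvent_objective_def m_def k_def .
qed

lemma objective_minimizing_sequence_Cauchy:
  fixes y :: "nat \<Rightarrow> 'a"
  assumes lower: "\<And>z. ereal m \<le> resolvent_objective f x z"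
    and y: "\<And>k. resolvent_objective f x (y k) = ereal (h k)" "\<And>k. h k < m + b k"
    and b: "b \<longlonglongrightarrow> 0"
  shows "Cauchy y"
proof (rule Cauchy_of_cos_half_dist_bound[OF dist_lt_pi_half])
  show "(\<lambda>k. b k / 2) \<longlonglongrightarrow> 0" using tendsto_divide_zero[OF b] by simp
  show "1 - cos (dist (y j) (y k) / 2) \<le> b j / 2 + b k / 2" for j k
  proof (cases "y j = y k")
    case False
    obtain g where g: "geodesic g (y j) (y k)" using geodesic_exists by blast
    have "ereal m \<le> ereal ((h j + h k) / 2 - (1 - cos (dist (y j) (y k) / 2)))"
      using lower objective_midpoint_le[OF y(1) y(1) False g] order_trans by blast
    then have "m \<le> (h j + h k) / 2 - (1 - cos (dist (y j) (y k) / 2))" by simp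
    then show ?thesis using y(2)[of j] y(2)[of k] by argo
  next
    case True
    have "m \<le> h j" "m \<le> h k" using lower y(1) by (metis ereal_less_eq(3))+
    then show ?thesis using True y(2)[of j] y(2)[of k] by simp
  qed
qed

lemma objective_le_of_minimizing_limit:
  fixes y :: "nat \<Rightarrow> 'a"
  assumes p: "y \<longlonglongrightarrow> p"
    and y: "\<And>k. resolvent_objective f x (y k) = ereal (h k)" "\<And>k. h k < m + b k"
    and b: "b \<longlonglongrightarrow> 0"
  shows "resolvent_objective f x p \<le> ereal m"
proof (rule ereal_le_epsilon2)
  fix e :: real assume "0 < e"
  have "eventually (\<lambda>k. penalty x p - e / 2 < penalty x (y k)) sequentially"
    using tendsto_penalty[OF p] \<open>0 < e\<close> by (intro order_tendstoD) auto
  moreover have "eventually (\<lambda>k. b k < e / 2) sequentially"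
    using b \<open>0 < e\<close> by (intro order_tendstoD) auto
  ultimately have "eventually (\<lambda>k. f (y k) \<le> ereal (m - penalty x p + e)) sequentially"
  proof eventually_elim
    case (elim k)
    have "f (y k) = ereal (h k - penalty x (y k))"
      using y(1)[of k] unfolding resolvent_objective_def
      by (cases "f (y k)") (auto simp: f_not_minf)
    then show ?case using y(2)[of k] elim by simp
  qed
  then have "f p \<le> ereal (m - penalty x p + e)" by (rule f_le_of_tendsto[OF p])
  then have "f p + ereal (penalty x p) \<le> ereal (m - penalty x p + e) + ereal (penalty x p)"
    by (rule add_right_mono)
  then show "resolvent_objective f x p \<le> ereal m + ereal e"
    unfolding resolvent_objective_def by simp
qed

lemma objective_has_min: "\<exists>p. \<forall>z. resolvent_objective f x p \<le> resolvent_objective f x z"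
proof -
  define \<mu> where "\<mu> = (INF y. resolvent_objective f x y)"
  have \<mu>_le: "\<mu> \<le> resolvent_objective f x z" for z unfolding \<mu>_def by (rule INF_lower) simp
  obtain M where "\<And>y. ereal M \<le> f y" using f_bounded_below by blast
  then have "ereal M \<le> resolvent_objective f x y" for y
    unfolding resolvent_objective_def using add_mono[of "ereal M" "f y" 0] penalty_nonneg by simp
  then have "ereal M \<le> \<mu>" unfolding \<mu>_def by (rule INF_greatest)
  moreover obtain x0 where "f x0 \<noteq> \<infinity>" using f_proper unfolding proper_fun_def by blast
  then have "\<mu> \<noteq> \<infinity>" using \<mu>_le[of x0] objective_finite_iff[of x x0] by auto
  ultimately obtain m where m: "\<mu> = ereal m" by (cases \<mu>) auto
  have "\<forall>k. \<exists>y. resolvent_objective f x y < ereal (m + inverse (real (Suc k)))"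
  proof
    fix k
    have "\<mu> < ereal (m + inverse (real (Suc k)))" using m by simp
    then show "\<exists>y. resolvent_objective f x y < ereal (m + inverse (real (Suc k)))"
      unfolding \<mu>_def by (simp add: INF_less_iff)
  qed
  then obtain y where y: "\<And>k. resolvent_objective f x (y k) < ereal (m + inverse (real (Suc k)))"
    by metis
  define h where "h k = real_of_ereal (resolvent_objective f x (y k))" for k
  have yh: "resolvent_objective f x (y k) = ereal (h k)" for k
    using y[of k] \<mu>_le[of "y k"] m unfolding h_def by (cases "resolvent_objective f x (y k)") auto
  have hm: "h k < m + inverse (real (Suc k))" for k using y[of k] yh[of k] by simp
  have "Cauchy y"
    using \<mu>_le m yh hm LIMSEQ_inverse_real_of_nat by (intro objective_minimizing_sequence_Cauchy) auto
  then obtain p where "y \<longlonglongrightarrow> p" using complete by (blast elim: completeE)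
  then have "resolvent_objective f x p \<le> \<mu>"
    unfolding m using yh hm LIMSEQ_inverse_real_of_nat by (rule objective_le_of_minimizing_limit)
  then show ?thesis using \<mu>_le order_trans by blast
qed

lemma objective_min_unique:
  assumes p: "\<And>z. resolvent_objective f x p \<le> resolvent_objective f x z"
    and q: "\<And>z. resolvent_objective f x q \<le> resolvent_objective f x z"
  shows "p = q"
proof (rule ccontr)
  assume ne: "p \<noteq> q"
  obtain x0 where "f x0 \<noteq> \<infinity>" using f_proper unfolding proper_fun_def by blast
  then have "resolvent_objective f x p \<noteq> \<infinity>"
    using p[of x0] objective_finite_iff[of x x0] by auto
  then obtain c where c: "resolvent_objective f x p = ereal c"
    using objective_eq_ereal objective_finite_iff by blast
  moreover have cq: "resolvent_objective f x q = ereal c" using c p q by (metis order_antisym)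
  moreover obtain g where g: "geodesic g p q" using geodesic_exists by blast
  ultimately have "resolvent_objective f x (g (dist p q / 2))
      \<le> ereal ((c + c) / 2 - (1 - cos (dist p q / 2)))"
    using ne by (intro objective_midpoint_le) simp_all
  moreover have "ereal c \<le> resolvent_objective f x (g (dist p q / 2))" using p c by metis
  ultimately have "ereal c \<le> ereal ((c + c) / 2 - (1 - cos (dist p q / 2)))"
    by (rule order_trans[rotated])
  then have "c \<le> c - (1 - cos (dist p q / 2))" by simp
  then show False using cos_half_dist_lt_one[OF ne] by simp
qed

abbreviation R where "R \<equiv> resolvent f"

lemma resolvent_minimizes: "resolvent_objective f x (R x) \<le> resolvent_objective f x z"
proof -
  have "\<exists>!p. p \<in> Argmin (resolvent_objective f x)"
    using objective_has_min objective_min_unique unfolding Argmin_def by blast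
  then have "R x \<in> Argmin (resolvent_objective f x)"
    unfolding resolvent_eq_The by (rule theI')
  then show ?thesis unfolding Argmin_def by blast
qed

lemma resolvent_eqI: "(\<And>z. resolvent_objective f x y \<le> resolvent_objective f x z) \<Longrightarrow> R x = y"
  using objective_min_unique resolvent_minimizes by blast

lemma f_resolvent_finite: "f (R x) \<noteq> \<infinity>"
proof -
  obtain x0 where "f x0 \<noteq> \<infinity>" using f_proper unfolding proper_fun_def by blast
  then show ?thesis
    using resolvent_minimizes[of x x0] objective_finite_iff[of x x0] objective_finite_iff[of x "R x"]
    by auto
qed

end

text \<open>By cos_dist_geodesic_point_ge, a lower bound for the cosine of the distance from the point at
  fraction t of a geodesic of length D to a point whose distances to the ends have cosines a and b.\<close>
definition geodesic_cos_bound :: "real \<Rightarrow> real \<Rightarrow> real \<Rightarrow> real \<Rightarrow> real" where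
  "geodesic_cos_bound a b D t = (sin ((1 - t) * D) * a + sin (t * D) * b) / sin D"

definition sec_weight :: "real \<Rightarrow> real" where
  "sec_weight c = 1 + 1 / c^2"

lemma sec_weight_pos: "0 < sec_weight c"
  unfolding sec_weight_def by (simp add: add_pos_nonneg)

lemma sec_weight_antimono: "0 < c1 \<Longrightarrow> c1 \<le> c2 \<Longrightarrow> sec_weight c2 \<le> sec_weight c1"
  unfolding sec_weight_def by (simp add: frac_le power_mono)

lemma DERIV_inv_sub_geodesic_cos_bound:
  assumes "0 < sin D" "0 < a"
  shows "((\<lambda>t. inv_sub (geodesic_cos_bound a b D t)) has_real_derivative
           sec_weight a * (D / sin D) * (cos D * a - b)) (at 0)"
proof -
  define L where "L = geodesic_cos_bound a b D"
  define L' where "L' = (- D * cos D * a + D * b) / sin D"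
  have L0: "L 0 = a" unfolding L_def geodesic_cos_bound_def using assms by simp
  have dL: "(L has_real_derivative L') (at 0)"
    unfolding L_def L'_def geodesic_cos_bound_def using assms
    by (auto intro!: derivative_eq_intros simp: field_simps)
  have "((\<lambda>t. inverse (L t) - L t) has_real_derivative - (L' * inverse ((L 0)^2)) - L') (at 0)"
    using L0 assms by (auto intro!: derivative_eq_intros dL simp: power2_eq_square)
  moreover have "- (L' * inverse ((L 0)^2)) - L' = sec_weight a * (D / sin D) * (cos D * a - b)"
    unfolding L0 L'_def sec_weight_def using assms by (simp add: field_simps power2_eq_square)
  ultimately show ?thesis unfolding L_def inv_sub_def by (simp add: inverse_eq_divide)
qed

context admissible_CAT1_convex
begin

text \<open>Moving from R x towards z by a fraction t changes f by at most the convex combination of the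
  end values, and the penalty by at most its comparison bound; minimality of R x then bounds the
  difference quotient.\<close>
lemma resolvent_difference_quotient_le:
  fixes x z :: 'a
  assumes fz: "f z = ereal Fz" and ne: "R x \<noteq> z" and t: "0 < t" "t < 1"
  defines "a \<equiv> cos (dist (R x) x)" and "b \<equiv> cos (dist z x)" and "D \<equiv> dist (R x) z"
  shows "real_of_ereal (f (R x)) - Fz \<le> (inv_sub (geodesic_cos_bound a b D t) - inv_sub a) / t"
proof -
  define y where "y = R x"
  obtain Fy where fy: "f y = ereal Fy" using f_eq_ereal f_resolvent_finite unfolding y_def by blast
  obtain g where g: "geodesic g y z" using geodesic_exists by blast
  define w where "w = g (t * D)"
  have D: "0 < D" "D < pi" "0 < sin D"
    using ne dist_lt_pi[of y z] sin_dist_pos[OF ne] unfolding D_def y_def by auto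
  have tD: "0 \<le> t * D" "t * D \<le> D" using t D by (auto simp: mult_le_cancel_right1)
  have "f w \<le> ereal ((1 - t) * Fy + t * Fz)"
    using f_geodesic_point_le[OF g t] fy fz unfolding w_def D_def y_def by simp
  then obtain Fw where fw: "f w = ereal Fw" and Fw: "Fw \<le> (1 - t) * Fy + t * Fz"
    using f_not_minf[of w] by (cases "f w") auto
  have "resolvent_objective f x y \<le> resolvent_objective f x w"
    unfolding y_def by (rule resolvent_minimizes)
  then have min: "Fy + penalty x y \<le> Fw + penalty x w"
    unfolding resolvent_objective_def using fy fw by simp
  have "sin ((1 - t) * D) * a + sin (t * D) * b \<le> cos (dist w x) * sin D"
    using cos_dist_geodesic_point_ge[OF g, of "t * D" x] ne tD
    unfolding w_def a_def b_def D_def y_def by (simp add: algebra_simps)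
  then have Lw: "geodesic_cos_bound a b D t \<le> cos (dist w x)"
    unfolding geodesic_cos_bound_def using D by (simp add: divide_le_eq)
  have "0 < sin ((1 - t) * D)" using t D
    by (intro sin_gt_zero) (auto intro: le_less_trans[of _ D] simp: mult_le_cancel_right1)
  moreover have "0 \<le> sin (t * D)" using tD D by (intro sin_ge_zero) linarith+
  moreover have "0 < a" "0 < b" unfolding a_def b_def by (simp_all add: cos_dist_pos)
  ultimately have "0 < geodesic_cos_bound a b D t"
    unfolding geodesic_cos_bound_def using D by (simp add: add_pos_nonneg)
  then have "penalty x w \<le> inv_sub (geodesic_cos_bound a b D t)"
    unfolding penalty_eq_inv_sub using Lw by (rule inv_sub_antimono)
  moreover have "penalty x y = inv_sub a" unfolding penalty_eq_inv_sub a_def y_def ..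
  ultimately have "t * (Fy - Fz) \<le> inv_sub (geodesic_cos_bound a b D t) - inv_sub a"
    using min Fw by (simp add: algebra_simps)
  then show ?thesis using t fy unfolding y_def by (simp add: pos_le_divide_eq mult.commute)
qed

lemma resolvent_variational_ineq:
  fixes x z :: 'a
  assumes fz: "f z \<noteq> \<infinity>" and ne: "z \<noteq> R x"
  shows "real_of_ereal (f (R x)) - real_of_ereal (f z)
    \<le> sec_weight (cos (dist (R x) x)) * (dist (R x) z / sin (dist (R x) z))
       * (cos (dist (R x) z) * cos (dist (R x) x) - cos (dist z x))"
proof (rule DERIV_ge_of_difference_quotients)
  show "((\<lambda>t. inv_sub (geodesic_cos_bound (cos (dist (R x) x)) (cos (dist z x)) (dist (R x) z) t))
      has_real_derivative sec_weight (cos (dist (R x) x)) * (dist (R x) z / sin (dist (R x) z))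
       * (cos (dist (R x) z) * cos (dist (R x) x) - cos (dist z x))) (at 0)"
    using sin_dist_pos[of "R x" z] ne cos_dist_pos by (intro DERIV_inv_sub_geodesic_cos_bound) auto
  show "real_of_ereal (f (R x)) - real_of_ereal (f z)
      \<le> (inv_sub (geodesic_cos_bound (cos (dist (R x) x)) (cos (dist z x)) (dist (R x) z) t)
         - inv_sub (geodesic_cos_bound (cos (dist (R x) x)) (cos (dist z x)) (dist (R x) z) 0)) / t"
    if "0 < t" "t < 1" for t
    using resolvent_difference_quotient_le[OF f_eq_ereal[OF fz] _ that] ne sin_dist_pos[of "R x" z]
    by (simp add: geodesic_cos_bound_def)
qed

text \<open>Adding the variational inequalities of R x1 tested at R x2 and vice versa.\<close>
lemma resolvent_cos_ineq:
  fixes x1 x2 :: 'a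
  defines "a1 \<equiv> cos (dist (R x1) x1)" and "a2 \<equiv> cos (dist (R x2) x2)"
  shows "sec_weight a1 * cos (dist (R x2) x1) + sec_weight a2 * cos (dist (R x1) x2)
    \<le> cos (dist (R x1) (R x2)) * (sec_weight a1 * a1 + sec_weight a2 * a2)"
proof (cases "R x1 = R x2")
  case True
  then show ?thesis unfolding a1_def a2_def by (simp add: algebra_simps)
next
  case False
  define K where "K = dist (R x1) (R x2) / sin (dist (R x1) (R x2))"
  have "0 < K" unfolding K_def using False sin_dist_pos[OF False] by simp
  have "real_of_ereal (f (R x1)) - real_of_ereal (f (R x2))
      \<le> sec_weight a1 * K * (cos (dist (R x1) (R x2)) * a1 - cos (dist (R x2) x1))"
    using resolvent_variational_ineq[OF f_resolvent_finite, of x2 x1] False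
    unfolding a1_def K_def by simp
  moreover have "real_of_ereal (f (R x2)) - real_of_ereal (f (R x1))
      \<le> sec_weight a2 * K * (cos (dist (R x1) (R x2)) * a2 - cos (dist (R x1) x2))"
    using resolvent_variational_ineq[OF f_resolvent_finite, of x1 x2] False
    unfolding a2_def K_def by (simp add: dist_commute)
  ultimately have "K * (sec_weight a1 * cos (dist (R x2) x1) + sec_weight a2 * cos (dist (R x1) x2))
      \<le> K * (cos (dist (R x1) (R x2)) * (sec_weight a1 * a1 + sec_weight a2 * a2))"
    by (simp add: algebra_simps)
  then show ?thesis using \<open>0 < K\<close> by (simp only: mult_le_cancel_left_pos)
qed

lemma resolvent_cos_ineq_step:
  fixes x q :: 'a
  defines "a1 \<equiv> cos (dist (R x) x)" and "a2 \<equiv> cos (dist (R q) q)"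
  shows "sec_weight a1 * cos (dist x (R q)) + sec_weight a2 * cos (dist (R x) q)
    \<le> cos (dist (R x) (R q)) * (sec_weight a1 + sec_weight a2 * a2)"
proof -
  have "sec_weight a1 * a1 \<le> sec_weight a1"
    using sec_weight_pos[of a1] unfolding a1_def by (simp add: mult_left_le_one_le)
  then have "cos (dist (R x) (R q)) * (sec_weight a1 * a1) \<le> cos (dist (R x) (R q)) * sec_weight a1"
    using cos_dist_pos[of "R x" "R q"] by (intro mult_left_mono) auto
  then show ?thesis
    using resolvent_cos_ineq[of x q] unfolding a1_def a2_def
    by (simp add: dist_commute distrib_left)
qed

lemma fixed_point_in_Argmin:
  assumes "R q = q" shows "q \<in> Argmin f"
  unfolding Argmin_def
proof (intro CollectI allI)
  fix z
  show "f q \<le> f z"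
  proof (cases "f z = \<infinity> \<or> z = q")
    case False
    then have "real_of_ereal (f q) \<le> real_of_ereal (f z)"
      using resolvent_variational_ineq[of z q] assms by (simp add: dist_commute)
    then show ?thesis
      using f_eq_ereal[of z] f_eq_ereal[of q] f_resolvent_finite[of q] False assms
      by (metis ereal_less_eq(3))
  qed auto
qed

lemma Argmin_fixed_point:
  assumes "q \<in> Argmin f" shows "R q = q"
proof (rule resolvent_eqI)
  fix z
  have "f q + ereal 0 \<le> f z + ereal (penalty q z)"
    using assms penalty_nonneg[of q z] unfolding Argmin_def by (intro add_mono) auto
  then show "resolvent_objective f q q \<le> resolvent_objective f q z"
    unfolding resolvent_objective_def by simp
qed

lemma cos_dist_Argmin_le:
  assumes p: "p \<in> Argmin f"
  shows "cos (dist p x) \<le> cos (dist (R x) p) * cos (dist (R x) x)"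
proof -
  define w where "w = sec_weight (cos (dist (R x) x))"
  have "w * cos (dist p x) + sec_weight 1 * cos (dist (R x) p)
      \<le> cos (dist (R x) p) * (w * cos (dist (R x) x) + sec_weight 1)"
    using resolvent_cos_ineq[of x p] Argmin_fixed_point[OF p] unfolding w_def by simp
  then have "w * cos (dist p x) \<le> w * (cos (dist (R x) p) * cos (dist (R x) x))"
    by (simp add: algebra_simps)
  then show ?thesis using sec_weight_pos unfolding w_def by simp
qed

end

section \<open>Asymptotic radii\<close>

lemma abs_cos_dist_diff_le: "\<bar>cos (dist a z) - cos (dist b z)\<bar> \<le> dist a b"
  using abs_cos_diff_le[of "dist a z" "dist b z"] abs_dist_diff_le[of a z b]
  by (simp add: dist_commute)

definition limsup_dist :: "(nat \<Rightarrow> 'a::metric_space) \<Rightarrow> 'a \<Rightarrow> real" where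
  "limsup_dist xs z = real_of_ereal (limsup (\<lambda>n. ereal (dist (xs n) z)))"

text \<open>Distances are below pi/2, where cos is decreasing, so maximising cos_limsup_dist is
  minimising the asymptotic radius; in cosines the CAT(1) estimates become linear.\<close>
definition cos_limsup_dist :: "(nat \<Rightarrow> 'a::metric_space) \<Rightarrow> 'a \<Rightarrow> real" where
  "cos_limsup_dist xs z = cos (limsup_dist xs z)"

context admissible_CAT1_convex
begin

lemma limsup_dist_bounds: "0 \<le> limsup_dist xs z" "limsup_dist xs z \<le> pi/2"
  and limsup_ereal_dist: "limsup (\<lambda>n. ereal (dist (xs n) z)) = ereal (limsup_dist xs z)"
  for xs :: "nat \<Rightarrow> 'a"
proof -
  have "limsup (\<lambda>n. ereal (dist (xs n) z)) \<le> ereal (pi/2)"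
    using dist_le_pi_half by (intro Limsup_bounded always_eventually allI) simp
  moreover have "ereal 0 \<le> limsup (\<lambda>n. ereal (dist (xs n) z))"
    by (rule le_Limsup) auto
  ultimately obtain r where "limsup (\<lambda>n. ereal (dist (xs n) z)) = ereal r" "0 \<le> r" "r \<le> pi/2"
    by (cases "limsup (\<lambda>n. ereal (dist (xs n) z))") auto
  then show "limsup (\<lambda>n. ereal (dist (xs n) z)) = ereal (limsup_dist xs z)"
    "0 \<le> limsup_dist xs z" "limsup_dist xs z \<le> pi/2"
    unfolding limsup_dist_def by simp_all
qed

lemma eventually_dist_lt_limsup_dist:
  fixes xs :: "nat \<Rightarrow> 'a"
  assumes "0 < e"
  shows "eventually (\<lambda>n. dist (xs n) z < limsup_dist xs z + e) sequentially"
proof -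
  have "limsup (\<lambda>n. ereal (dist (xs n) z)) < ereal (limsup_dist xs z + e)"
    using assms by (simp add: limsup_ereal_dist)
  then show ?thesis by (auto dest: Limsup_lessD)
qed

lemma frequently_dist_gt_limsup_dist:
  fixes xs :: "nat \<Rightarrow> 'a"
  shows "0 < e \<Longrightarrow> frequently (\<lambda>n. limsup_dist xs z - e < dist (xs n) z) sequentially"
proof (rule ccontr)
  assume "0 < e" "\<not> frequently (\<lambda>n. limsup_dist xs z - e < dist (xs n) z) sequentially"
  then have "eventually (\<lambda>n. ereal (dist (xs n) z) \<le> ereal (limsup_dist xs z - e)) sequentially"
    unfolding not_frequently by (auto elim!: eventually_mono)
  then have "limsup (\<lambda>n. ereal (dist (xs n) z)) \<le> ereal (limsup_dist xs z - e)"
    by (rule Limsup_bounded)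
  then show False using \<open>0 < e\<close> by (simp add: limsup_ereal_dist)
qed

lemma limsup_dist_le:
  fixes xs :: "nat \<Rightarrow> 'a"
  assumes "eventually (\<lambda>n. dist (xs n) z \<le> t) sequentially"
  shows "limsup_dist xs z \<le> t"
proof -
  have "limsup (\<lambda>n. ereal (dist (xs n) z)) \<le> ereal t"
    using assms by (intro Limsup_bounded) simp
  then show ?thesis by (simp add: limsup_ereal_dist)
qed

lemma limsup_dist_eq_of_tendsto:
  assumes "(\<lambda>n. dist (xs n) z) \<longlonglongrightarrow> L"
  shows "limsup_dist xs z = L"
proof -
  have "limsup (\<lambda>n. ereal (dist (xs n) z)) = ereal L"
    using assms by (intro lim_imp_Limsup tendsto_ereal) auto
  then show ?thesis unfolding limsup_dist_def by simp
qed

lemma cos_limsup_dist_bounds: "0 \<le> cos_limsup_dist xs z" "cos_limsup_dist xs z \<le> 1"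
  for xs :: "nat \<Rightarrow> 'a"
  unfolding cos_limsup_dist_def using limsup_dist_bounds[of xs z] by (auto intro!: cos_ge_zero)

lemma limsup_dist_less_iff:
  fixes xs ys :: "nat \<Rightarrow> 'a"
  shows "limsup_dist xs z < limsup_dist ys w \<longleftrightarrow> cos_limsup_dist ys w < cos_limsup_dist xs z"
  unfolding cos_limsup_dist_def using limsup_dist_bounds[of xs z] limsup_dist_bounds[of ys w]
  by (intro cos_mono_less_eq[symmetric]) auto

lemma eventually_cos_dist_gt:
  fixes xs :: "nat \<Rightarrow> 'a"
  assumes "0 < e"
  shows "eventually (\<lambda>n. cos_limsup_dist xs z - e < cos (dist (xs n) z)) sequentially"
  using eventually_dist_lt_limsup_dist[OF assms, of xs z]
proof eventually_elim
  case (elim n)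
  show ?case
  proof (cases "dist (xs n) z \<le> limsup_dist xs z")
    case True
    then show ?thesis using assms limsup_dist_bounds[of xs z] dist_le_pi_half[of "xs n" z]
      unfolding cos_limsup_dist_def by (smt (verit) cos_le_cos_of_le_pi_half zero_le_dist)
  next
    case False
    then show ?thesis using elim abs_cos_diff_le[of "limsup_dist xs z" "dist (xs n) z"]
      unfolding cos_limsup_dist_def by linarith
  qed
qed

lemma frequently_cos_dist_lt:
  fixes xs :: "nat \<Rightarrow> 'a"
  assumes "0 < e"
  shows "frequently (\<lambda>n. cos (dist (xs n) z) < cos_limsup_dist xs z + e) sequentially"
  using frequently_dist_gt_limsup_dist[OF assms, of xs z]
proof (rule frequently_elim1)
  fix n assume gt: "limsup_dist xs z - e < dist (xs n) z"
  show "cos (dist (xs n) z) < cos_limsup_dist xs z + e"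
  proof (cases "limsup_dist xs z \<le> dist (xs n) z")
    case True
    then show ?thesis using assms limsup_dist_bounds[of xs z] dist_le_pi_half[of "xs n" z]
      unfolding cos_limsup_dist_def by (smt (verit) cos_le_cos_of_le_pi_half)
  next
    case False
    then show ?thesis using gt abs_cos_diff_le[of "limsup_dist xs z" "dist (xs n) z"]
      unfolding cos_limsup_dist_def by linarith
  qed
qed

lemma cos_limsup_dist_ge:
  fixes xs :: "nat \<Rightarrow> 'a"
  assumes ev: "eventually (\<lambda>n. t \<le> cos (dist (xs n) z)) sequentially"
  shows "t \<le> cos_limsup_dist xs z"
proof (cases "0 < t")
  case True
  have "t \<le> 1" using ev eventually_happens'[OF trivial_limit_sequentially ev]
    by (meson cos_le_one order_trans)
  then have ac: "0 \<le> arccos t" "arccos t \<le> pi" "cos (arccos t) = t"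
    using True by (auto intro: arccos_lbound arccos_ubound simp: cos_arccos)
  have "eventually (\<lambda>n. dist (xs n) z \<le> arccos t) sequentially" using ev
  proof eventually_elim
    case (elim n)
    then have "cos (arccos t) \<le> cos (dist (xs n) z)" using ac by simp
    then show ?case using ac dist_lt_pi[of "xs n" z] by (subst (asm) cos_mono_le_eq) auto
  qed
  then have "limsup_dist xs z \<le> arccos t" by (rule limsup_dist_le)
  then have "cos (arccos t) \<le> cos (limsup_dist xs z)"
    using ac limsup_dist_bounds[of xs z] by (intro cos_monotone_0_pi_le) auto
  then show ?thesis using ac unfolding cos_limsup_dist_def by simp
qed (use cos_limsup_dist_bounds in \<open>meson not_less order_trans\<close>)

lemma cos_limsup_dist_combination_le:
  fixes xs :: "nat \<Rightarrow> 'a"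
  assumes c: "0 \<le> c0" "0 \<le> c1" "0 \<le> c2" and e: "e \<longlonglongrightarrow> e0"
    and ev: "eventually (\<lambda>n. c1 * cos (dist (xs n) z1) + c2 * cos (dist (xs n) z2)
              \<le> c0 * cos (dist (xs n) m) + e n) sequentially"
  shows "c1 * cos_limsup_dist xs z1 + c2 * cos_limsup_dist xs z2 \<le> c0 * cos_limsup_dist xs m + e0"
proof (rule ccontr)
  define \<theta> where "\<theta> = cos_limsup_dist xs"
  assume "\<not> ?thesis"
  then have gap: "0 < c1 * \<theta> z1 + c2 * \<theta> z2 - (c0 * \<theta> m + e0)" unfolding \<theta>_def by simp
  define \<epsilon> where "\<epsilon> = (c1 * \<theta> z1 + c2 * \<theta> z2 - (c0 * \<theta> m + e0)) / (c0 + c1 + c2 + 2)"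
  have "0 < \<epsilon>" unfolding \<epsilon>_def using gap c by simp
  have "\<epsilon> * (c0 + c1 + c2 + 2) = c1 * \<theta> z1 + c2 * \<theta> z2 - (c0 * \<theta> m + e0)"
    unfolding \<epsilon>_def using c by simp
  then have \<epsilon>: "c1 * \<theta> z1 + c2 * \<theta> z2 - (c0 * \<theta> m + e0) = \<epsilon> * c0 + \<epsilon> * c1 + \<epsilon> * c2 + 2 * \<epsilon>"
    by (simp add: algebra_simps)
  have "eventually (\<lambda>n. e n < e0 + \<epsilon>) sequentially"
    using e \<open>0 < \<epsilon>\<close> by (intro order_tendstoD) auto
  with eventually_cos_dist_gt[OF \<open>0 < \<epsilon>\<close>, of xs z1] eventually_cos_dist_gt[OF \<open>0 < \<epsilon>\<close>, of xs z2] ev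
  have "eventually (\<lambda>n. \<not> cos (dist (xs n) m) < \<theta> m + \<epsilon>) sequentially"
  proof eventually_elim
    case (elim n)
    show ?case
    proof
      assume "cos (dist (xs n) m) < \<theta> m + \<epsilon>"
      then have "c0 * cos (dist (xs n) m) \<le> c0 * (\<theta> m + \<epsilon>)" using c by (intro mult_left_mono) auto
      moreover have "c1 * (\<theta> z1 - \<epsilon>) \<le> c1 * cos (dist (xs n) z1)"
        using elim(1) c unfolding \<theta>_def by (intro mult_left_mono) auto
      moreover have "c2 * (\<theta> z2 - \<epsilon>) \<le> c2 * cos (dist (xs n) z2)"
        using elim(2) c unfolding \<theta>_def by (intro mult_left_mono) auto
      ultimately show False using elim(3,4) \<epsilon> \<open>0 < \<epsilon>\<close> by (simp add: algebra_simps)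
    qed
  qed
  then show False
    using frequently_cos_dist_lt[OF \<open>0 < \<epsilon>\<close>, of xs m] unfolding \<theta>_def
    by (simp add: frequently_def)
qed

lemma cos_limsup_dist_lipschitz:
  fixes xs :: "nat \<Rightarrow> 'a"
  shows "cos_limsup_dist xs w - dist z w \<le> cos_limsup_dist xs z"
proof -
  have "1 * cos_limsup_dist xs w + 0 * cos_limsup_dist xs w \<le> 1 * cos_limsup_dist xs z + dist z w"
  proof (intro cos_limsup_dist_combination_le always_eventually allI)
    fix n
    show "1 * cos (dist (xs n) w) + 0 * cos (dist (xs n) w) \<le> 1 * cos (dist (xs n) z) + dist z w"
      using abs_cos_dist_diff_le[of w "xs n" z] by (simp add: dist_commute abs_le_iff)
  qed auto
  then show ?thesis by simp
qed

lemma cos_limsup_dist_midpoint_ge: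
  fixes xs :: "nat \<Rightarrow> 'a"
  assumes ne: "z1 \<noteq> z2" and g: "geodesic g z1 z2"
  shows "cos_limsup_dist xs z1 + cos_limsup_dist xs z2
    \<le> 2 * cos (dist z1 z2 / 2) * cos_limsup_dist xs (g (dist z1 z2 / 2))"
proof -
  have "1 * cos_limsup_dist xs z1 + 1 * cos_limsup_dist xs z2
      \<le> (2 * cos (dist z1 z2 / 2)) * cos_limsup_dist xs (g (dist z1 z2 / 2)) + 0"
  proof (intro cos_limsup_dist_combination_le always_eventually allI)
    fix n
    show "1 * cos (dist (xs n) z1) + 1 * cos (dist (xs n) z2)
        \<le> 2 * cos (dist z1 z2 / 2) * cos (dist (xs n) (g (dist z1 z2 / 2))) + 0"
      using cos_dist_midpoint_ge[OF g ne, of "xs n"] by (simp add: dist_commute)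
  qed (use cos_half_dist_pos[of z1 z2] in auto)
  then show ?thesis by simp
qed

lemma cos_limsup_dist_maximizing_sequence_Cauchy:
  fixes xs z :: "nat \<Rightarrow> 'a"
  assumes upper: "\<And>y. cos_limsup_dist xs y \<le> T" and "0 < T"
    and z: "\<And>k. T - b k < cos_limsup_dist xs (z k)" and b: "b \<longlonglongrightarrow> 0"
  shows "Cauchy z"
proof (rule Cauchy_of_cos_half_dist_bound[OF dist_lt_pi_half])
  show "(\<lambda>k. b k / (2 * T)) \<longlonglongrightarrow> 0" using b by (rule tendsto_divide_zero)
  show "1 - cos (dist (z j) (z k) / 2) \<le> b j / (2 * T) + b k / (2 * T)" for j k
  proof (cases "z j = z k")
    case False
    obtain g where g: "geodesic g (z j) (z k)" using geodesic_exists by blast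
    define \<kappa> where "\<kappa> = cos (dist (z j) (z k) / 2)"
    have "cos_limsup_dist xs (z j) + cos_limsup_dist xs (z k)
        \<le> 2 * \<kappa> * cos_limsup_dist xs (g (dist (z j) (z k) / 2))"
      unfolding \<kappa>_def by (rule cos_limsup_dist_midpoint_ge[OF False g])
    also have "\<dots> \<le> 2 * \<kappa> * T"
      using upper cos_half_dist_pos[of "z j" "z k"] unfolding \<kappa>_def by (intro mult_left_mono) auto
    finally have "2 * T * (1 - \<kappa>) < b j + b k" using z[of j] z[of k] by (simp add: algebra_simps)
    then have "1 - \<kappa> < (b j + b k) / (2 * T)"
      using \<open>0 < T\<close> by (simp add: pos_less_divide_eq mult.commute)
    then show ?thesis unfolding \<kappa>_def by (simp add: add_divide_distrib)
  next
    case True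
    have "0 \<le> b i" for i using z[of i] upper[of "z i"] by linarith
    then show ?thesis using True \<open>0 < T\<close> by simp
  qed
qed

lemma cos_limsup_dist_has_max:
  fixes xs :: "nat \<Rightarrow> 'a"
  assumes pos: "0 < cos_limsup_dist xs y0"
  shows "\<exists>q. \<forall>z. cos_limsup_dist xs z \<le> cos_limsup_dist xs q"
proof -
  define \<theta> where "\<theta> = cos_limsup_dist xs"
  define T where "T = Sup (range \<theta>)"
  have bdd: "bdd_above (range \<theta>)"
    unfolding \<theta>_def by (rule bdd_aboveI2[where M=1]) (rule cos_limsup_dist_bounds(2))
  have T_ge: "\<theta> z \<le> T" for z unfolding T_def by (rule cSUP_upper[OF _ bdd]) auto
  have "0 < T" using T_ge[of y0] pos unfolding \<theta>_def by linarith
  have "\<forall>k. \<exists>z. T - inverse (real (Suc k)) < \<theta> z"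
  proof
    fix k
    have "T - inverse (real (Suc k)) < T" by simp
    then show "\<exists>z. T - inverse (real (Suc k)) < \<theta> z" unfolding T_def using less_cSUP_iff[OF _ bdd] by auto
  qed
  then obtain z where z: "\<And>k. T - inverse (real (Suc k)) < \<theta> (z k)" by metis
  have "Cauchy z"
    using T_ge \<open>0 < T\<close> z LIMSEQ_inverse_real_of_nat unfolding \<theta>_def
    by (rule cos_limsup_dist_maximizing_sequence_Cauchy)
  then obtain p where p: "z \<longlonglongrightarrow> p" using complete by (blast elim: completeE)
  have "(\<lambda>k. dist p (z k)) \<longlonglongrightarrow> 0" using tendsto_dist[OF tendsto_const p, of p] by simp
  then have "(\<lambda>k. T - inverse (real (Suc k)) - dist p (z k)) \<longlonglongrightarrow> T - 0 - 0"
    by (intro tendsto_diff tendsto_const LIMSEQ_inverse_real_of_nat)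
  moreover have "T - inverse (real (Suc k)) - dist p (z k) \<le> \<theta> p" for k
    using z[of k] cos_limsup_dist_lipschitz[of xs "z k" p] unfolding \<theta>_def by linarith
  ultimately have "T \<le> \<theta> p" by (intro LIMSEQ_le_const2) auto
  then have "\<theta> z \<le> \<theta> p" for z using T_ge[of z] by linarith
  then show ?thesis unfolding \<theta>_def by blast
qed

lemma cos_limsup_dist_max_unique:
  fixes xs :: "nat \<Rightarrow> 'a"
  assumes max: "\<And>z. cos_limsup_dist xs z \<le> cos_limsup_dist xs q"
    and pos: "0 < cos_limsup_dist xs q" and ne: "w \<noteq> q"
  shows "cos_limsup_dist xs w < cos_limsup_dist xs q"
proof (rule ccontr)
  define T where "T = cos_limsup_dist xs q"
  define \<kappa> where "\<kappa> = cos (dist w q / 2)"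
  assume "\<not> ?thesis"
  then have w: "cos_limsup_dist xs w = T" using max[of w] unfolding T_def by simp
  obtain g where g: "geodesic g w q" using geodesic_exists by blast
  have "cos_limsup_dist xs w + T \<le> 2 * \<kappa> * cos_limsup_dist xs (g (dist w q / 2))"
    unfolding \<kappa>_def T_def by (rule cos_limsup_dist_midpoint_ge[OF ne g])
  also have "\<dots> \<le> 2 * \<kappa> * T"
    using max cos_half_dist_pos[of w q] unfolding \<kappa>_def T_def by (intro mult_left_mono) auto
  finally have "T * 1 \<le> T * \<kappa>" using w by (simp add: mult.commute)
  then show False using cos_half_dist_lt_one[OF ne] pos unfolding \<kappa>_def T_def by simp
qed

section \<open>Orbits of the resolvent\<close>

lemma resolvent_orbit_cos_ineq:
  fixes xs :: "nat \<Rightarrow> 'a"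
  assumes orbit: "\<And>n. xs (Suc n) = R (xs n)"
  shows "sec_weight (cos (dist (xs (Suc n)) (xs n))) * cos (dist (xs n) (R q))
           + sec_weight (cos (dist (R q) q)) * cos (dist (xs (Suc n)) q)
         \<le> cos (dist (xs (Suc n)) (R q))
           * (sec_weight (cos (dist (xs (Suc n)) (xs n))) + sec_weight (cos (dist (R q) q)) * cos (dist (R q) q))"
  using resolvent_cos_ineq_step[of "xs n" q] unfolding orbit .

text \<open>By resolvent_orbit_cos_ineq, cos (dist (xs (Suc n)) (R q)) dominates a weighted average of
  cos (dist (xs n) (R q)) and cos (dist (xs (Suc n)) q) / cos (dist (R q) q); when the steps are
  bounded away from pi/2 the weight of the latter is bounded below.\<close>
lemma cos_limsup_dist_le_of_bounded_steps:
  fixes xs :: "nat \<Rightarrow> 'a"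
  assumes orbit: "\<And>n. xs (Suc n) = R (xs n)"
    and steps: "\<And>n. c \<le> cos (dist (xs (Suc n)) (xs n))" and "0 < c"
  shows "cos_limsup_dist xs q \<le> cos (dist (R q) q) * cos_limsup_dist xs (R q)"
proof (rule field_le_epsilon)
  fix \<epsilon> :: real assume "0 < \<epsilon>"
  define a where "a = cos (dist (R q) q)"
  define w where "w n = sec_weight (cos (dist (xs (Suc n)) (xs n)))" for n
  define T where "T = (cos_limsup_dist xs q - \<epsilon>) / a"
  have a: "0 < a" unfolding a_def by (rule cos_dist_pos)
  have w: "0 < w n" "w n \<le> sec_weight c" for n
    unfolding w_def using steps \<open>0 < c\<close> by (simp_all add: sec_weight_pos sec_weight_antimono)
  obtain N where N: "\<And>n. N \<le> n \<Longrightarrow> cos_limsup_dist xs q - \<epsilon> < cos (dist (xs n) q)"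
    using eventually_cos_dist_gt[OF \<open>0 < \<epsilon>\<close>, of xs q] unfolding eventually_sequentially by blast
  have "w n * cos (dist (xs n) (R q)) + sec_weight a * a * T
      \<le> cos (dist (xs (Suc n)) (R q)) * (w n + sec_weight a * a)" if "N \<le> n" for n
  proof -
    have "a * T \<le> cos (dist (xs (Suc n)) q)" using N[of "Suc n"] that a unfolding T_def by simp
    then have "sec_weight a * (a * T) \<le> sec_weight a * cos (dist (xs (Suc n)) q)"
      by (rule mult_left_mono) (simp add: less_imp_le sec_weight_pos)
    then show ?thesis
      using resolvent_orbit_cos_ineq[where xs = xs, OF orbit, of n q] unfolding w_def a_def by (simp add: mult.assoc)
  qed
  from eventually_gt_of_weighted_average[where \<alpha> = "\<lambda>n. cos (dist (xs n) (R q))" and w = w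
      and c = "sec_weight a * a", OF _ w this]
  have ev: "eventually (\<lambda>n. T - \<epsilon>' < cos (dist (xs n) (R q))) sequentially" if "0 < \<epsilon>'" for \<epsilon>'
    using that a sec_weight_pos[of a] by simp
  have T_le: "T - \<epsilon>' \<le> cos_limsup_dist xs (R q)" if "0 < \<epsilon>'" for \<epsilon>'
    by (intro cos_limsup_dist_ge eventually_mono[OF ev[OF that]]) simp
  have "T \<le> cos_limsup_dist xs (R q)"
  proof (rule field_le_epsilon)
    show "T \<le> cos_limsup_dist xs (R q) + \<epsilon>'" if "0 < \<epsilon>'" for \<epsilon>' using T_le[OF that] by linarith
  qed
  then have "a * T \<le> a * cos_limsup_dist xs (R q)" using a by (intro mult_left_mono) auto
  moreover have "a * T = cos_limsup_dist xs q - \<epsilon>" unfolding T_def using a by simp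
  ultimately show "cos_limsup_dist xs q \<le> cos (dist (R q) q) * cos_limsup_dist xs (R q) + \<epsilon>"
    unfolding a_def by linarith
qed

text \<open>Shifting indices in resolvent_orbit_cos_ineq costs an error proportional to the step, since
  cos \<circ> dist is 1-Lipschitz.\<close>
lemma orbit_cos_dist_le_up_to_step:
  fixes xs :: "nat \<Rightarrow> 'a"
  assumes orbit: "\<And>n. xs (Suc n) = R (xs n)"
    and steps: "\<And>n. c \<le> cos (dist (xs (Suc n)) (xs n))" and "0 < c"
  shows "\<exists>K. \<forall>n. cos (dist (xs n) q)
           \<le> cos (dist (R q) q) * cos (dist (xs n) (R q)) + K * dist (xs (Suc n)) (xs n)"
proof -
  define a where "a = cos (dist (R q) q)"
  define v where "v = sec_weight a"
  define W where "W = sec_weight c"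
  define w where "w n = sec_weight (cos (dist (xs (Suc n)) (xs n)))" for n
  define \<alpha> where "\<alpha> n = cos (dist (xs n) (R q))" for n
  define \<beta> where "\<beta> n = cos (dist (xs n) q)" for n
  define \<delta> where "\<delta> n = dist (xs (Suc n)) (xs n)" for n
  have a: "0 < a" "a \<le> 1" unfolding a_def by (simp_all add: cos_dist_pos)
  have "0 < v" unfolding v_def by (rule sec_weight_pos)
  have w: "0 < w n" "w n \<le> W" for n
    unfolding w_def W_def using steps \<open>0 < c\<close> by (simp_all add: sec_weight_pos sec_weight_antimono)
  have lip: "\<bar>\<alpha> (Suc n) - \<alpha> n\<bar> \<le> \<delta> n" "\<bar>\<beta> (Suc n) - \<beta> n\<bar> \<le> \<delta> n" for n
    unfolding \<alpha>_def \<beta>_def \<delta>_def by (rule abs_cos_dist_diff_le)+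
  have "\<beta> n \<le> a * \<alpha> n + (W + v + v * a) / v * \<delta> n" for n
  proof -
    have "v * \<beta> (Suc n) - v * a * \<alpha> (Suc n) \<le> w n * (\<alpha> (Suc n) - \<alpha> n)"
      using resolvent_orbit_cos_ineq[where xs = xs, OF orbit, of n q]
      unfolding w_def \<alpha>_def \<beta>_def a_def v_def by (simp add: algebra_simps)
    also have "\<dots> \<le> w n * \<bar>\<alpha> (Suc n) - \<alpha> n\<bar>" using w(1)[of n] by (intro mult_left_mono) auto
    also have "\<dots> \<le> W * \<delta> n"
      using w[of n] lip(1)[of n] by (intro mult_mono) (auto simp: \<delta>_def)
    finally have "v * \<beta> (Suc n) - v * a * \<alpha> (Suc n) \<le> W * \<delta> n" .
    moreover have "v * \<beta> n \<le> v * \<beta> (Suc n) + v * \<delta> n"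
      using lip(2)[of n] \<open>0 < v\<close> by (simp add: abs_le_iff flip: distrib_left)
    moreover have "v * a * \<alpha> (Suc n) \<le> v * a * \<alpha> n + v * a * \<delta> n"
      using lip(1)[of n] \<open>0 < v\<close> a by (simp add: abs_le_iff flip: distrib_left)
    ultimately have "v * \<beta> n \<le> v * a * \<alpha> n + (W + v + v * a) * \<delta> n"
      by (simp add: algebra_simps)
    also have "\<dots> = v * (a * \<alpha> n + (W + v + v * a) / v * \<delta> n)"
      using \<open>0 < v\<close> by (simp add: field_simps)
    finally show ?thesis using \<open>0 < v\<close> by simp
  qed
  then show ?thesis unfolding a_def \<alpha>_def \<beta>_def \<delta>_def by blast
qed

lemma cos_limsup_dist_le_of_vanishing_steps:
  fixes xs :: "nat \<Rightarrow> 'a"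
  assumes orbit: "\<And>n. xs (Suc n) = R (xs n)"
    and steps: "\<And>n. c \<le> cos (dist (xs (Suc n)) (xs n))" and "0 < c"
    and vanish: "(\<lambda>n. dist (xs (Suc n)) (xs n)) \<longlonglongrightarrow> 0" and r: "strict_mono r"
  shows "cos_limsup_dist (xs \<circ> r) q \<le> cos (dist (R q) q) * cos_limsup_dist (xs \<circ> r) (R q)"
proof -
  obtain K where K: "\<And>n. cos (dist (xs n) q)
      \<le> cos (dist (R q) q) * cos (dist (xs n) (R q)) + K * dist (xs (Suc n)) (xs n)"
    using orbit_cos_dist_le_up_to_step[where xs = xs, OF orbit steps \<open>0 < c\<close>] by blast
  have "(\<lambda>i. K * dist (xs (Suc (r i))) (xs (r i))) \<longlonglongrightarrow> 0"
    using LIMSEQ_subseq_LIMSEQ[OF vanish r] unfolding o_def by (rule tendsto_mult_right_zero)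
  then have "1 * cos_limsup_dist (xs \<circ> r) q + 0 * cos_limsup_dist (xs \<circ> r) q
      \<le> cos (dist (R q) q) * cos_limsup_dist (xs \<circ> r) (R q) + 0"
    using K cos_dist_pos[of "R q" q]
    by (intro cos_limsup_dist_combination_le always_eventually) auto
  then show ?thesis by simp
qed

lemma fixed_point_of_cos_limsup_dist_max:
  fixes ys :: "nat \<Rightarrow> 'a"
  assumes max: "\<And>z. cos_limsup_dist ys z \<le> cos_limsup_dist ys q"
    and pos: "0 < cos_limsup_dist ys q"
    and le: "cos_limsup_dist ys q \<le> cos (dist (R q) q) * cos_limsup_dist ys (R q)"
  shows "R q = q"
proof (rule ccontr)
  assume "R q \<noteq> q"
  then have "cos (dist (R q) q) < 1" by (rule cos_dist_lt_one)
  moreover have "cos (dist (R q) q) * cos_limsup_dist ys (R q) \<le> cos (dist (R q) q) * cos_limsup_dist ys q"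
    using max cos_dist_pos[of "R q" q] by (intro mult_left_mono) auto
  ultimately show False using le pos by (smt (verit) mult_less_cancel_right2)
qed

lemma orbit_cos_dist_Argmin_le:
  fixes xs :: "nat \<Rightarrow> 'a"
  assumes orbit: "\<And>n. xs (Suc n) = R (xs n)" and p: "p \<in> Argmin f"
  shows "cos (dist (xs n) p) \<le> cos (dist (xs (Suc n)) p) * cos (dist (xs (Suc n)) (xs n))"
  using cos_dist_Argmin_le[OF p, of "xs n"] unfolding orbit by (simp add: dist_commute)

lemma orbit_cos_dist_Argmin_mono:
  fixes xs :: "nat \<Rightarrow> 'a"
  assumes orbit: "\<And>n. xs (Suc n) = R (xs n)" and p: "p \<in> Argmin f"
  shows "cos (dist (xs n) p) \<le> cos (dist (xs (Suc n)) p)"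
    and "cos (dist (xs n) p) \<le> cos (dist (xs (Suc n)) (xs n))"
proof -
  note orbit_cos_dist_Argmin_le[where xs = xs, OF orbit p, of n]
  moreover have "cos (dist (xs (Suc n)) p) * cos (dist (xs (Suc n)) (xs n)) \<le> cos (dist (xs (Suc n)) p)"
    using cos_dist_pos[of "xs (Suc n)" p] cos_dist_pos[of "xs (Suc n)" "xs n"]
    by (intro mult_right_le_one_le) auto
  moreover have "cos (dist (xs (Suc n)) p) * cos (dist (xs (Suc n)) (xs n)) \<le> cos (dist (xs (Suc n)) (xs n))"
    using cos_dist_pos[of "xs (Suc n)" p] cos_dist_pos[of "xs (Suc n)" "xs n"]
    by (intro mult_left_le_one_le) auto
  ultimately show "cos (dist (xs n) p) \<le> cos (dist (xs (Suc n)) p)"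
    and "cos (dist (xs n) p) \<le> cos (dist (xs (Suc n)) (xs n))"
    by linarith+
qed

lemma orbit_cos_dist_Argmin_lower_bounds:
  fixes xs :: "nat \<Rightarrow> 'a"
  assumes orbit: "\<And>n. xs (Suc n) = R (xs n)" and p: "p \<in> Argmin f"
  shows "cos (dist (xs 0) p) \<le> cos (dist (xs n) p)"
    and "cos (dist (xs 0) p) \<le> cos (dist (xs (Suc n)) (xs n))"
proof -
  have "incseq (\<lambda>n. cos (dist (xs n) p))"
    using orbit_cos_dist_Argmin_mono(1)[where xs = xs, OF orbit p] by (rule incseq_SucI)
  then show "cos (dist (xs 0) p) \<le> cos (dist (xs n) p)" by (simp add: incseq_def)
  then show "cos (dist (xs 0) p) \<le> cos (dist (xs (Suc n)) (xs n))"
    using orbit_cos_dist_Argmin_mono(2)[where xs = xs, OF orbit p, of n] by linarith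
qed

text \<open>The cosines of the distances to a minimiser increase to a positive limit, so their ratios,
  which bound the cosines of the steps from below, tend to 1.\<close>
lemma orbit_steps_tendsto_zero:
  fixes xs :: "nat \<Rightarrow> 'a"
  assumes orbit: "\<And>n. xs (Suc n) = R (xs n)" and p: "p \<in> Argmin f"
  shows "(\<lambda>n. dist (xs (Suc n)) (xs n)) \<longlonglongrightarrow> 0"
proof (rule tendsto_zero_of_cos_tendsto_one)
  define \<beta> where "\<beta> n = cos (dist (xs n) p)" for n
  have \<beta>: "0 < \<beta> n" "\<beta> n \<le> 1" for n unfolding \<beta>_def by (simp_all add: cos_dist_pos)
  have "incseq \<beta>" unfolding \<beta>_def
    using orbit_cos_dist_Argmin_mono(1)[where xs = xs, OF orbit p] by (rule incseq_SucI)
  then obtain l where l: "\<beta> \<longlonglongrightarrow> l" "\<And>n. \<beta> n \<le> l"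
    using incseq_convergent[of \<beta> 1] \<beta> by blast
  then have "0 < l" using \<beta>(1)[of 0] by (meson less_le_trans)
  show "(\<lambda>n. cos (dist (xs (Suc n)) (xs n))) \<longlonglongrightarrow> 1"
  proof (rule tendsto_sandwich[of "\<lambda>n. \<beta> n / \<beta> (Suc n)" _ _ "\<lambda>_. 1"])
    have "\<beta> n / \<beta> (Suc n) \<le> cos (dist (xs (Suc n)) (xs n))" for n
      using orbit_cos_dist_Argmin_le[where xs = xs, OF orbit p, of n] \<beta>(1)[of "Suc n"]
      unfolding \<beta>_def by (simp add: divide_le_eq mult.commute)
    then show "eventually (\<lambda>n. \<beta> n / \<beta> (Suc n) \<le> cos (dist (xs (Suc n)) (xs n))) sequentially"
      by simp
    have "(\<lambda>n. \<beta> n / \<beta> (Suc n)) \<longlonglongrightarrow> l / l"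
      using \<open>0 < l\<close> by (intro tendsto_divide l(1) LIMSEQ_Suc[OF l(1)]) auto
    then show "(\<lambda>n. \<beta> n / \<beta> (Suc n)) \<longlonglongrightarrow> 1" using \<open>0 < l\<close> by simp
  qed auto
qed (use dist_le_pi_half in auto)

lemma orbit_dist_Argmin_convergent:
  fixes xs :: "nat \<Rightarrow> 'a"
  assumes orbit: "\<And>n. xs (Suc n) = R (xs n)" and p: "p \<in> Argmin f"
  shows "convergent (\<lambda>n. dist (xs n) p)"
proof -
  have "dist (xs (Suc n)) p \<le> dist (xs n) p" for n
    using orbit_cos_dist_Argmin_mono(1)[where xs = xs, OF orbit p, of n] dist_lt_pi[of "xs n" p]
      dist_lt_pi[of "xs (Suc n)" p] by (subst (asm) cos_mono_le_eq) auto
  then have "decseq (\<lambda>n. dist (xs n) p)" by (rule decseq_SucI)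
  then show ?thesis
    using decseq_convergent[of "\<lambda>n. dist (xs n) p" 0] unfolding convergent_def by auto
qed

lemma cos_limsup_dist_pos_of_spherically_bounded:
  fixes xs :: "nat \<Rightarrow> 'a"
  assumes "spherically_bounded xs"
  shows "\<exists>y. 0 < cos_limsup_dist xs y"
proof -
  obtain y where "limsup (\<lambda>n. ereal (dist (xs n) y)) < ereal (pi/2)"
    using assms unfolding spherically_bounded_def by (auto simp: INF_less_iff)
  then have "limsup_dist xs y < pi/2" by (simp add: limsup_ereal_dist)
  then have "0 < cos_limsup_dist xs y"
    unfolding cos_limsup_dist_def using limsup_dist_bounds(1)[of xs y]
    by (intro cos_gt_zero_pi) auto
  then show ?thesis ..
qed

lemma cos_steps_bounded_below:
  fixes xs :: "nat \<Rightarrow> 'a"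
  assumes "(SUP n. ereal (dist (xs (Suc n)) (xs n))) < ereal (pi/2)"
  shows "\<exists>c>0. \<forall>n. c \<le> cos (dist (xs (Suc n)) (xs n))"
proof -
  define S where "S = (SUP n. ereal (dist (xs (Suc n)) (xs n)))"
  have step_le: "ereal (dist (xs (Suc n)) (xs n)) \<le> S" for n unfolding S_def by (rule SUP_upper) simp
  then have "ereal 0 \<le> S" by (rule order_trans[rotated]) simp
  then obtain \<sigma> where \<sigma>: "S = ereal \<sigma>" "0 \<le> \<sigma>" "\<sigma> < pi/2"
    using assms unfolding S_def[symmetric] by (cases S) auto
  have "cos \<sigma> \<le> cos (dist (xs (Suc n)) (xs n))" for n
    using step_le[of n] \<sigma> by (intro cos_le_cos_of_le_pi_half) auto
  moreover have "0 < cos \<sigma>" using \<sigma> by (intro cos_gt_zero_pi) auto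
  ultimately show ?thesis by blast
qed

lemma Argmin_nonempty_of_bounded_orbit:
  fixes xs :: "nat \<Rightarrow> 'a"
  assumes orbit: "\<And>n. xs (Suc n) = R (xs n)" and "spherically_bounded xs"
    and "(SUP n. ereal (dist (xs (Suc n)) (xs n))) < ereal (pi/2)"
  shows "Argmin f \<noteq> {}"
proof -
  obtain y where "0 < cos_limsup_dist xs y"
    using cos_limsup_dist_pos_of_spherically_bounded assms(2) by blast
  then obtain q where max: "\<And>z. cos_limsup_dist xs z \<le> cos_limsup_dist xs q"
    and pos: "0 < cos_limsup_dist xs q"
    using cos_limsup_dist_has_max by (meson less_le_trans)
  obtain c where "0 < c" "\<And>n. c \<le> cos (dist (xs (Suc n)) (xs n))"
    using cos_steps_bounded_below assms(3) by blast
  then have "R q = q"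
    using max pos cos_limsup_dist_le_of_bounded_steps[where xs = xs, OF orbit]
    by (intro fixed_point_of_cos_limsup_dist_max) auto
  then show ?thesis using fixed_point_in_Argmin by blast
qed

lemma limsup_dist_subseq_Argmin:
  fixes xs :: "nat \<Rightarrow> 'a"
  assumes orbit: "\<And>n. xs (Suc n) = R (xs n)" and z: "z \<in> Argmin f" and r: "strict_mono r"
  shows "limsup_dist (xs \<circ> r) z = limsup_dist xs z"
proof -
  obtain L where L: "(\<lambda>n. dist (xs n) z) \<longlonglongrightarrow> L"
    using orbit_dist_Argmin_convergent[where xs = xs, OF orbit z] unfolding convergent_def by blast
  then have "(\<lambda>i. dist ((xs \<circ> r) i) z) \<longlonglongrightarrow> L"
    using LIMSEQ_subseq_LIMSEQ[OF L r] by (simp add: o_def)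
  then show ?thesis using L by (simp add: limsup_dist_eq_of_tendsto)
qed

text \<open>Asymptotic centres of subsequences of an orbit are minimisers: positivity comes from the
  Fejer monotonicity towards a minimiser p, and the fixed-point property from the vanishing steps.\<close>
lemma subseq_asymptotic_centre_in_Argmin:
  fixes xs :: "nat \<Rightarrow> 'a"
  assumes orbit: "\<And>n. xs (Suc n) = R (xs n)" and p: "p \<in> Argmin f" and r: "strict_mono r"
  obtains q where "q \<in> Argmin f" "\<And>z. cos_limsup_dist (xs \<circ> r) z \<le> cos_limsup_dist (xs \<circ> r) q"
proof -
  have "cos (dist (xs 0) p) \<le> cos_limsup_dist (xs \<circ> r) p"
    using orbit_cos_dist_Argmin_lower_bounds(1)[where xs = xs, OF orbit p]
    by (intro cos_limsup_dist_ge) simp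
  then have "0 < cos_limsup_dist (xs \<circ> r) p" using cos_dist_pos[of "xs 0" p] by linarith
  then obtain q where max: "\<And>z. cos_limsup_dist (xs \<circ> r) z \<le> cos_limsup_dist (xs \<circ> r) q"
    using cos_limsup_dist_has_max by blast
  have "R q = q"
  proof (rule fixed_point_of_cos_limsup_dist_max[OF max])
    show "0 < cos_limsup_dist (xs \<circ> r) q"
      using max[of p] \<open>0 < cos_limsup_dist (xs \<circ> r) p\<close> by linarith
    show "cos_limsup_dist (xs \<circ> r) q \<le> cos (dist (R q) q) * cos_limsup_dist (xs \<circ> r) (R q)"
      using orbit_cos_dist_Argmin_lower_bounds(2)[where xs = xs, OF orbit p] cos_dist_pos[of "xs 0" p]
        orbit_steps_tendsto_zero[where xs = xs, OF orbit p] r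
      by (intro cos_limsup_dist_le_of_vanishing_steps[where xs = xs, OF orbit]) auto
  qed
  then show ?thesis using that fixed_point_in_Argmin max by blast
qed

lemma orbit_Delta_convergent:
  fixes xs :: "nat \<Rightarrow> 'a"
  assumes orbit: "\<And>n. xs (Suc n) = R (xs n)" and p: "p \<in> Argmin f"
  shows "\<exists>q\<in>Argmin f. Delta_convergent xs q"
proof -
  obtain q where q: "q \<in> Argmin f" and max: "\<And>z. cos_limsup_dist xs z \<le> cos_limsup_dist xs q"
    using subseq_asymptotic_centre_in_Argmin[where xs = xs, OF orbit p strict_mono_id] by auto
  have "limsup (\<lambda>i. ereal (dist (xs (r i)) q)) < limsup (\<lambda>i. ereal (dist (xs (r i)) z))"
    if r: "strict_mono r" and "z \<noteq> q" for r z
  proof -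
    define ys where "ys = xs \<circ> r"
    obtain q' where q': "q' \<in> Argmin f" and max': "\<And>z. cos_limsup_dist ys z \<le> cos_limsup_dist ys q'"
      using subseq_asymptotic_centre_in_Argmin[where xs = xs, OF orbit p r] unfolding ys_def by auto
    have "0 < cos_limsup_dist ys q'"
      using max'[of p] cos_limsup_dist_ge[of "cos (dist (xs 0) p)" ys p]
        orbit_cos_dist_Argmin_lower_bounds(1)[where xs = xs, OF orbit p] cos_dist_pos[of "xs 0" p]
      unfolding ys_def by fastforce
    have same: "cos_limsup_dist ys z = cos_limsup_dist xs z" if "z \<in> Argmin f" for z
      using limsup_dist_subseq_Argmin[where xs = xs, OF orbit that r]
      unfolding ys_def cos_limsup_dist_def by simp
    have "cos_limsup_dist ys q' \<le> cos_limsup_dist ys q"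
      using max[of q'] same[OF q] same[OF q'] by simp
    then have "q' = q"
      using cos_limsup_dist_max_unique[OF max' \<open>0 < cos_limsup_dist ys q'\<close>, of q] by fastforce
    then have "cos_limsup_dist ys z < cos_limsup_dist ys q"
      using cos_limsup_dist_max_unique[OF max' \<open>0 < cos_limsup_dist ys q'\<close>] \<open>z \<noteq> q\<close> by simp
    then have "limsup_dist ys q < limsup_dist ys z" by (simp add: limsup_dist_less_iff)
    then show ?thesis unfolding ys_def by (simp add: limsup_ereal_dist o_def)
  qed
  then show ?thesis using q unfolding Delta_convergent_def by blast
qed

lemma orbit_of_Argmin_bounded:
  assumes p: "p \<in> Argmin f"
  shows "spherically_bounded (\<lambda>n. (R ^^ n) p)"
    and "(SUP n. ereal (dist ((R ^^ Suc n) p) ((R ^^ n) p))) < ereal (pi / 2)"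
proof -
  have fixed: "(R ^^ n) p = p" for n
    by (induction n) (simp_all add: Argmin_fixed_point[OF p])
  have "(INF y. limsup (\<lambda>n. ereal (dist ((R ^^ n) p) y))) \<le> limsup (\<lambda>n. ereal (dist p p))"
    unfolding fixed by (rule INF_lower) simp
  then show "spherically_bounded (\<lambda>n. (R ^^ n) p)"
    unfolding spherically_bounded_def by (simp add: Limsup_const le_less_trans)
  show "(SUP n. ereal (dist ((R ^^ Suc n) p) ((R ^^ n) p))) < ereal (pi / 2)"
    by (simp only: fixed) simp
qed

end

theorem corollary4p8:
  fixes f :: "'a::metric_space \<Rightarrow> ereal"
  assumes "CAT1_space TYPE('a)" and "admissible TYPE('a)" and "complete (UNIV :: 'a set)"
    and "\<forall>x. f x \<noteq> -\<infinity>" and "proper_fun f" and "lsc f" and "geod_convex f"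
  shows "(Argmin f \<noteq> {} \<longleftrightarrow>
           (\<exists>x. spherically_bounded (\<lambda>n. (resolvent f ^^ n) x) \<and>
                (SUP n. ereal (dist ((resolvent f ^^ Suc n) x) ((resolvent f ^^ n) x))) < ereal (pi / 2)))
       \<and> (Argmin f \<noteq> {} \<longrightarrow>
           (\<forall>x. \<exists>p \<in> Argmin f. Delta_convergent (\<lambda>n. (resolvent f ^^ n) x) p))"
proof -
  interpret admissible_CAT1_convex f using assms by unfold_locales auto
  show ?thesis
  proof (intro conjI impI allI iffI)
    assume "Argmin f \<noteq> {}"
    then obtain p where "p \<in> Argmin f" by blast
    then show "\<exists>x. spherically_bounded (\<lambda>n. (R ^^ n) x) \<and>
        (SUP n. ereal (dist ((R ^^ Suc n) x) ((R ^^ n) x))) < ereal (pi / 2)"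
      using orbit_of_Argmin_bounded by blast
  next
    assume "\<exists>x. spherically_bounded (\<lambda>n. (R ^^ n) x) \<and>
        (SUP n. ereal (dist ((R ^^ Suc n) x) ((R ^^ n) x))) < ereal (pi / 2)"
    then obtain x where "spherically_bounded (\<lambda>n. (R ^^ n) x)"
      "(SUP n. ereal (dist ((R ^^ Suc n) x) ((R ^^ n) x))) < ereal (pi / 2)" by blast
    then show "Argmin f \<noteq> {}"
      by (intro Argmin_nonempty_of_bounded_orbit[where xs = "\<lambda>n. (R ^^ n) x"]) simp_all
  next
    fix x assume "Argmin f \<noteq> {}"
    then obtain p where "p \<in> Argmin f" by blast
    then show "\<exists>p\<in>Argmin f. Delta_convergent (\<lambda>n. (R ^^ n) x) p"
      by (intro orbit_Delta_convergent[where xs = "\<lambda>n. (R ^^ n) x"]) simp_all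
  qed
qed

end
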